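(* Let $\mathbb L\subset\mathbb Z^k$ be a sublattice of finite index and $m_1,\dots,m_k$ positive integers, $|m|=\sum m_i$. Let $W\subset\mathbb R^k$ be a wall of codimension $r$ not contained in any hyperplane $\{b_i=0\}$, and let $C$ be an open cell of $W\cap\mathbb R^k_+$. Then there exists $c\ge0$ with \[\sum_{\substack{\underline b\cdot\underline h\le N\\ b_i,h_i\in\mathbb N\\ \underline b\in C\cap\mathbb L}}b_1^{m_1}\cdots b_k^{m_k}=c\,N^{|m|+k-r}+o(N^{|m|+k-r})\quad(N\to\infty),\] and $c>0$ if and only if $W\cap\mathbb L$ is a lattice in $W$.
   Context: A wall in $\mathbb R^k$ is a hyperplane $\sum_{i\in I}b_i-\sum_{j\in J}b_j=0$ ($I,J\subset\{1..k\}$ disjoint) or an intersection of such hyperplanes; the walls subdivide $\mathbb R^k$ into relatively open polyhedral cones (cells); an open cell of $W\cap\mathbb R^k_+$ is such a cone open in $W\cap\mathbb R^k_+$ of dimension $k-r$. $\mathbb N=\{1,2,\dots\}$ and $\underline b\cdot\underline h=\sum b_ih_i$. *)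

theory Defs
  imports "HOL-Analysis.Analysis" "HOL-Library.Landau_Symbols"
begin

text \<open>Vectors in R^k are modelled as real^'k with a finite index type 'k (k = CARD('k)).\<close>

definition wall_pairs :: "('k::finite set \<times> 'k set) set" where
  "wall_pairs = {(I,J). I \<inter> J = {} \<and> I \<union> J \<noteq> {}}"

definition wall_form :: "'k::finite set \<Rightarrow> 'k set \<Rightarrow> real^'k \<Rightarrow> real" where
  "wall_form I J b = (\<Sum>i\<in>I. b$i) - (\<Sum>j\<in>J. b$j)"

definition wall_hyperplane :: "'k::finite set \<Rightarrow> 'k set \<Rightarrow> (real^'k) set" where
  "wall_hyperplane I J = {b. wall_form I J b = 0}"

definition is_wall :: "(real^'k::finite) set \<Rightarrow> bool" where
  "is_wall W \<longleftrightarrow> (\<exists>F. F \<noteq> {} \<and> F \<subseteq> wall_pairs \<and>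
      W = (\<Inter>(I,J)\<in>F. wall_hyperplane I J))"

text \<open>Cells of the subdivision of R^k by all walls: the classes of points having the
  same position (sign) relative to every wall hyperplane.\<close>
definition is_cell :: "(real^'k::finite) set \<Rightarrow> bool" where
  "is_cell C \<longleftrightarrow> (\<exists>a. C = {b. \<forall>(I,J)\<in>wall_pairs. sgn (wall_form I J b) = sgn (wall_form I J a)})"

definition pos_orthant :: "(real^'k::finite) set" where
  "pos_orthant = {b. \<forall>i. 0 < b$i}"

text \<open>An open cell of W \<inter> R^k_+: a cell contained in W \<inter> R^k_+ of dimension dim W = k - r.\<close>
definition open_cell_of :: "(real^'k::finite) set \<Rightarrow> (real^'k) set \<Rightarrow> bool" where
  "open_cell_of W C \<longleftrightarrow> is_cell C \<and> C \<subseteq> W \<inter> pos_orthant \<and> aff_dim C = int (dim W)"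

definition int_vecs :: "(real^'k::finite) set" where
  "int_vecs = {x. \<forall>i. x$i \<in> \<int>}"

definition finite_index_sublattice :: "(real^'k::finite) set \<Rightarrow> bool" where
  "finite_index_sublattice L \<longleftrightarrow> L \<subseteq> int_vecs \<and> 0 \<in> L \<and>
     (\<forall>x\<in>L. \<forall>y\<in>L. x + y \<in> L) \<and> (\<forall>x\<in>L. - x \<in> L) \<and>
     finite {{y \<in> int_vecs. y - x \<in> L} | x. x \<in> int_vecs}"

definition lattice_in :: "(real^'k::finite) set \<Rightarrow> (real^'k) set \<Rightarrow> bool" where
  "lattice_in \<Lambda> V \<longleftrightarrow> \<Lambda> \<subseteq> V \<and> 0 \<in> \<Lambda> \<and> (\<forall>x\<in>\<Lambda>. \<forall>y\<in>\<Lambda>. x + y \<in> \<Lambda>) \<and> (\<forall>x\<in>\<Lambda>. - x \<in> \<Lambda>) \<and>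
     (\<exists>e>0. \<forall>x\<in>\<Lambda>. x \<noteq> 0 \<longrightarrow> e \<le> norm x) \<and> span \<Lambda> = V"

definition real_vec :: "nat^'k::finite \<Rightarrow> real^'k" where
  "real_vec b = (\<chi> i. real (b$i))"

definition wall_sum :: "(real^'k::finite) set \<Rightarrow> (real^'k) set \<Rightarrow> ('k \<Rightarrow> nat) \<Rightarrow> real \<Rightarrow> real" where
  "wall_sum C L m N = (\<Sum>(b,h)\<in>{(b::nat^'k, h::nat^'k).
        (\<forall>i. 1 \<le> b$i \<and> 1 \<le> h$i) \<and> real (\<Sum>i\<in>UNIV. b$i * h$i) \<le> N \<and>
        real_vec b \<in> C \<inter> L}.
      \<Prod>i\<in>UNIV. real (b$i) ^ m i)"

end

theory Submission
  imports Defs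
begin

text \<open>Rescaling \<open>b = N y\<close> turns the sum into \<open>N\<^sup>|\<^sup>m\<^sup>|\<close> times a sum over the points \<open>b\<close> of \<open>W \<inter> L\<close>
  of a bounded density at \<open>b / N\<close>: the monomial \<open>y\<^sup>m\<close> times the number of \<open>h \<in> \<nat>\<^sup>k\<close> with
  \<open>y \<cdot> h \<le> 1\<close>, restricted to \<open>y \<in> C\<close>. Since \<open>W\<close> is cut out by integral linear forms,
  \<open>W \<inter> L\<close> spans \<open>W\<close> and is a lattice in it. Splitting \<open>W \<inter> L\<close> into the finitely many
  cosets of the lattice generated by a basis of \<open>W\<close> inside \<open>W \<inter> L\<close>, each coset contributes
  a Riemann sum of mesh \<open>1/N\<close> in the basis coordinates, i.e. \<open>N\<^sup>d\<^sup>i\<^sup>m \<^sup>W\<close> times the integral of a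
  step function. The density is discontinuous only on countably many hyperplanes,
  so by dominated convergence the normalised sum tends to the number of cosets times the
  integral of the density over the basis coordinates, which is positive because \<open>C\<close> is open
  in \<open>W\<close>. Hence \<open>c > 0\<close> always, matching the fact that \<open>W \<inter> L\<close> is always a lattice in \<open>W\<close>.\<close>

lemma int_vecs_diff: "x \<in> int_vecs \<Longrightarrow> y \<in> int_vecs \<Longrightarrow> x - y \<in> int_vecs"
  and int_vecs_scale: "x \<in> int_vecs \<Longrightarrow> c \<in> \<int> \<Longrightarrow> c *\<^sub>R x \<in> int_vecs"
  unfolding int_vecs_def by auto

lemma int_vecs_norm_ge_1:
  assumes "x \<in> int_vecs" "x \<noteq> 0"
  shows "1 \<le> norm (x :: real^'k::finite)"
proof -
  obtain i where i: "x$i \<noteq> 0" using assms(2) by (auto simp: vec_eq_iff)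
  have "x$i \<in> \<int>" using assms(1) unfolding int_vecs_def by auto
  then have "1 \<le> \<bar>x$i\<bar>" using i by (simp add: Ints_nonzero_abs_ge1)
  also have "\<dots> \<le> norm x" by (rule component_le_norm_cart)
  finally show ?thesis .
qed

lemma finite_int_vecs_norm_le: "finite {x::real^'k::finite. x \<in> int_vecs \<and> norm x \<le> B}"
proof -
  have "{x::real^'k. x \<in> int_vecs \<and> norm x \<le> B} \<subseteq>
      (\<lambda>f. \<chi> i. real_of_int (f i)) ` PiE UNIV (\<lambda>_. {-\<lceil>B\<rceil>..\<lceil>B\<rceil>})"
  proof
    fix x :: "real^'k" assume x: "x \<in> {x. x \<in> int_vecs \<and> norm x \<le> B}"
    have xi: "x$i = of_int \<lfloor>x$i\<rfloor>" for i using x unfolding int_vecs_def by simp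
    have "\<lfloor>x$i\<rfloor> \<in> {-\<lceil>B\<rceil>..\<lceil>B\<rceil>}" for i
    proof -
      have "\<bar>x$i\<bar> \<le> B" using x component_le_norm_cart[of x i] by auto
      then have "- B \<le> x$i" "x$i \<le> B" by auto
      then have "\<lfloor>- B\<rfloor> \<le> \<lfloor>x$i\<rfloor>" "\<lfloor>x$i\<rfloor> \<le> \<lceil>B\<rceil>"
        using floor_mono floor_le_ceiling order_trans by blast+
      then show ?thesis by (simp add: floor_minus)
    qed
    moreover have "x = (\<chi> i. real_of_int \<lfloor>x$i\<rfloor>)" using xi by (simp add: vec_eq_iff)
    ultimately show "x \<in> (\<lambda>f. \<chi> i. real_of_int (f i)) ` PiE UNIV (\<lambda>_. {-\<lceil>B\<rceil>..\<lceil>B\<rceil>})"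
      by (intro image_eqI[of _ _ "\<lambda>i. \<lfloor>x$i\<rfloor>"]) auto
  qed
  then show ?thesis by (rule finite_subset) (intro finite_imageI finite_PiE; simp)
qed

lemma wall_form_simps [simp]:
  "wall_form I J 0 = 0"
  "wall_form I J (x + y) = wall_form I J x + wall_form I J y"
  "wall_form I J (c *\<^sub>R x) = c * wall_form I J x"
  by (simp_all add: wall_form_def sum.distrib sum_distrib_left algebra_simps)

lemma linear_wall_form: "linear (wall_form I J)"
  by (rule linearI) simp_all

lemma subspace_wall_hyperplane: "subspace (wall_hyperplane I J)"
  unfolding wall_hyperplane_def subspace_def by simp

lemma wall_form_int_vecs: "x \<in> int_vecs \<Longrightarrow> wall_form I J x \<in> \<int>"
  unfolding wall_form_def int_vecs_def by (intro Ints_diff Ints_sum) auto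

lemma wall_form_tendsto [tendsto_intros]:
  "(f \<longlongrightarrow> y) F \<Longrightarrow> ((\<lambda>x. wall_form I J (f x)) \<longlongrightarrow> wall_form I J y) F"
  unfolding wall_form_def by (intro tendsto_intros)

text \<open>Rational elimination: if \<open>f v \<noteq> 0\<close> for some \<open>v \<in> G\<close>, the integer vectors
  \<open>f v *\<^sub>R g - f g *\<^sub>R v\<close> lie in the kernel and span the image of \<open>span G\<close> under
  the projection \<open>x \<mapsto> x - (f x / f v) *\<^sub>R v\<close> onto it.\<close>
lemma kernel_in_span_int_vecs:
  fixes f :: "real^'k::finite \<Rightarrow> real"
  assumes lin: "linear f" and fint: "\<And>x. x \<in> int_vecs \<Longrightarrow> f x \<in> \<int>"
    and G: "G \<subseteq> int_vecs" and w: "w \<in> span G" and fw: "f w = 0"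
  shows "w \<in> span (span G \<inter> {x. f x = 0} \<inter> int_vecs)"
proof (cases "\<forall>g\<in>G. f g = 0")
  case True
  have "span G \<subseteq> {x. f x = 0}"
    using True lin by (intro span_minimal) (auto simp: subspace_def linear_0 linear_add linear_scale)
  then have "G \<subseteq> span G \<inter> {x. f x = 0} \<inter> int_vecs"
    using G span_base by blast
  then show ?thesis using w span_mono by blast
next
  case False
  then obtain v where v: "v \<in> G" "f v \<noteq> 0" by blast
  define Q where "Q x = x - (f x / f v) *\<^sub>R v" for x
  define K where "K = span G \<inter> {x. f x = 0} \<inter> int_vecs"
  have linQ: "linear Q"
    unfolding Q_def using lin
    by (intro linearI) (simp_all add: linear_add linear_scale add_divide_distrib scaleR_add_left
        scaleR_diff_right)
  have QG: "Q g \<in> span K" if g: "g \<in> G" for g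
  proof -
    have "f v *\<^sub>R g - f g *\<^sub>R v \<in> span G"
      using g v by (intro span_diff span_scale span_base)
    moreover have "f v *\<^sub>R g - f g *\<^sub>R v \<in> int_vecs"
      using G g v fint by (intro int_vecs_diff int_vecs_scale) auto
    moreover have "f (f v *\<^sub>R g - f g *\<^sub>R v) = 0"
      using lin by (simp add: linear_diff linear_scale)
    ultimately have "f v *\<^sub>R g - f g *\<^sub>R v \<in> K" by (simp add: K_def)
    then have "(1 / f v) *\<^sub>R (f v *\<^sub>R g - f g *\<^sub>R v) \<in> span K"
      by (intro span_scale span_base)
    then show ?thesis
      using v(2) by (simp add: Q_def scaleR_diff_right divide_inverse mult.commute)
  qed
  have "Q w \<in> Q ` span G" using w by blast
  also have "\<dots> = span (Q ` G)" using span_linear_image[OF linQ] by simp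
  also have "\<dots> \<subseteq> span K" using QG by (simp add: image_subset_iff span_minimal)
  finally show ?thesis using fw by (simp add: Q_def K_def)
qed

lemma inter_wall_hyperplanes_subset_span_int_vecs:
  fixes F :: "('k::finite set \<times> 'k set) set"
  assumes "finite F"
  shows "(\<Inter>(I,J)\<in>F. wall_hyperplane I J) \<subseteq> span ((\<Inter>(I,J)\<in>F. wall_hyperplane I J) \<inter> int_vecs)"
  using assms
proof (induction F rule: finite_induct)
  case empty
  have "(Basis :: (real^'k) set) \<subseteq> int_vecs"
    by (auto simp: Basis_vec_def int_vecs_def axis_def)
  then show ?case using span_mono[of Basis int_vecs] by (simp add: span_Basis)
next
  case (insert p F)
  obtain I J where p: "p = (I, J)" by (cases p)
  define W where "W = (\<Inter>(I,J)\<in>F. wall_hyperplane I J)"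
  have "subspace W"
    unfolding W_def by (intro subspace_Inter) (auto simp: subspace_wall_hyperplane)
  then have spanW: "span (W \<inter> int_vecs) = W"
    using insert.IH span_minimal[of "W \<inter> int_vecs" W] unfolding W_def by blast
  have eq: "(\<Inter>(I,J)\<in>insert p F. wall_hyperplane I J) = W \<inter> {x. wall_form I J x = 0}"
    by (auto simp: p W_def wall_hyperplane_def)
  show ?case
    unfolding eq
  proof
    fix w assume "w \<in> W \<inter> {x. wall_form I J x = 0}"
    then have "w \<in> span (W \<inter> int_vecs)" "wall_form I J w = 0"
      using spanW by auto
    then have "w \<in> span (span (W \<inter> int_vecs) \<inter> {x. wall_form I J x = 0} \<inter> int_vecs)"
      by (intro kernel_in_span_int_vecs linear_wall_form wall_form_int_vecs) auto
    then show "w \<in> span (W \<inter> {x. wall_form I J x = 0} \<inter> int_vecs)"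
      by (simp add: spanW)
  qed
qed

lemma subspace_wall: "is_wall W \<Longrightarrow> subspace W"
  unfolding is_wall_def by (auto intro!: subspace_Inter simp: subspace_wall_hyperplane)

lemma wall_subset_span_int_vecs:
  assumes "is_wall (W :: (real^'k::finite) set)"
  shows "W \<subseteq> span (W \<inter> int_vecs)"
proof -
  obtain F where "F \<subseteq> wall_pairs" "W = (\<Inter>(I,J)\<in>F. wall_hyperplane I J)"
    using assms unfolding is_wall_def by blast
  moreover have "finite F" by (rule finite_subset[OF subset_UNIV]) simp
  ultimately show ?thesis using inter_wall_hyperplanes_subset_span_int_vecs by blast
qed

locale index_lattice =
  fixes L :: "(real^'k::finite) set"
  assumes finite_index: "finite_index_sublattice L"
begin

lemma L_int_vecs: "x \<in> L \<Longrightarrow> x \<in> int_vecs"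
  and L_zero: "0 \<in> L"
  and L_add: "x \<in> L \<Longrightarrow> y \<in> L \<Longrightarrow> x + y \<in> L"
  and L_neg: "x \<in> L \<Longrightarrow> - x \<in> L"
  using finite_index unfolding finite_index_sublattice_def by auto

lemma L_diff: "x \<in> L \<Longrightarrow> y \<in> L \<Longrightarrow> x - y \<in> L"
  using L_add[of x "- y"] L_neg[of y] by simp

lemma L_of_nat_scale: "x \<in> L \<Longrightarrow> real n *\<^sub>R x \<in> L"
  by (induction n) (auto simp: L_zero L_add scaleR_add_left)

lemma L_int_scale:
  assumes "x \<in> L" "c \<in> \<int>"
  shows "c *\<^sub>R x \<in> L"
proof -
  obtain z where z: "c = of_int z" using assms(2) Ints_cases by blast
  show ?thesis
  proof (cases "z \<ge> 0")
    case True
    then have "c = real (nat z)" using z by simp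
    then show ?thesis using L_of_nat_scale[OF assms(1)] by simp
  next
    case False
    then have "c = - real (nat (- z))" using z by simp
    then show ?thesis using L_neg[OF L_of_nat_scale[OF assms(1), of "nat (-z)"]] by simp
  qed
qed

lemma L_sum: "finite A \<Longrightarrow> (\<And>a. a \<in> A \<Longrightarrow> f a \<in> L) \<Longrightarrow> sum f A \<in> L"
  by (induction A rule: finite_induct) (auto simp: L_zero L_add)

text \<open>Pigeonhole on the finitely many cosets: two of \<open>0, x, \<dots>, n x\<close> (\<open>n\<close> the
  number of cosets) are congruent, so some \<open>j x\<close> with \<open>0 < j \<le> n\<close> lies in \<open>L\<close>,
  and hence so does \<open>n! x\<close>.\<close>
lemma fact_scale_in_L:
  assumes x: "x \<in> int_vecs"
  shows "real (fact (card {{y \<in> int_vecs. y - x \<in> L} | x. x \<in> int_vecs})) *\<^sub>R x \<in> L"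
proof -
  define Cs where "Cs = {{y \<in> int_vecs. y - x \<in> L} | x. x \<in> int_vecs}"
  define n where "n = card Cs"
  define coset where "coset j = {y \<in> int_vecs. y - real j *\<^sub>R x \<in> L}" for j :: nat
  have "finite Cs" using finite_index unfolding finite_index_sublattice_def Cs_def by auto
  moreover have "coset ` {0..n} \<subseteq> Cs"
    unfolding coset_def Cs_def using x by (auto intro!: int_vecs_scale)
  ultimately have "card (coset ` {0..n}) < card {0..n}"
    using card_mono[of Cs "coset ` {0..n}"] by (simp add: n_def)
  then have "\<not> inj_on coset {0..n}" by (rule pigeonhole)
  then obtain j j' where "j \<in> {0..n}" "j' \<in> {0..n}" "j \<noteq> j'" "coset j = coset j'"
    unfolding inj_on_def by blast
  then obtain a b where ab: "coset a = coset b" "b < a" "a \<le> n"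
    by (metis atLeastAtMost_iff linorder_neqE_nat)
  have "real a *\<^sub>R x \<in> coset a" unfolding coset_def using x L_zero by (auto intro!: int_vecs_scale)
  then have "(real a - real b) *\<^sub>R x \<in> L"
    using ab(1) unfolding coset_def by (simp add: scaleR_diff_left)
  then have abL: "real (a - b) *\<^sub>R x \<in> L" using ab by (simp add: of_nat_diff)
  have "(a - b) dvd fact n" using ab by (intro dvd_fact) auto
  then obtain q where q: "fact n = (a - b) * q" by blast
  have "real (fact n) *\<^sub>R x = real q *\<^sub>R (real (a - b) *\<^sub>R x)"
    by (simp add: q mult.commute)
  then have "real (fact n) *\<^sub>R x \<in> L" using L_of_nat_scale[OF abL, of q] by (auto simp: L_zero)
  then show ?thesis by (simp add: n_def Cs_def)
qed

lemma span_inter_L: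
  assumes K: "subspace K" "K \<subseteq> span (K \<inter> int_vecs)"
  shows "span (K \<inter> L) = K"
proof
  show "span (K \<inter> L) \<subseteq> K" using K(1) by (intro span_minimal) auto
  define M :: real where "M = fact (card {{y \<in> int_vecs. y - x \<in> L} | x. x \<in> int_vecs})"
  have "K \<inter> int_vecs \<subseteq> span (K \<inter> L)"
  proof
    fix g assume g: "g \<in> K \<inter> int_vecs"
    then have "M *\<^sub>R g \<in> K \<inter> L"
      using fact_scale_in_L K(1) by (auto simp: M_def subspace_scale)
    then have "(1 / M) *\<^sub>R (M *\<^sub>R g) \<in> span (K \<inter> L)"
      by (intro span_scale span_base)
    then show "g \<in> span (K \<inter> L)" by (simp add: M_def)
  qed
  then show "K \<subseteq> span (K \<inter> L)" using K(2) span_minimal[OF _ subspace_span] by blast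
qed

lemma lattice_in_inter_L:
  assumes "subspace K" "span (K \<inter> L) = K"
  shows "lattice_in (K \<inter> L) K"
  unfolding lattice_in_def
proof (intro conjI)
  show "0 \<in> K \<inter> L" using assms(1) L_zero by (simp add: subspace_0)
  show "\<forall>x\<in>K \<inter> L. \<forall>y\<in>K \<inter> L. x + y \<in> K \<inter> L" using assms(1) L_add by (simp add: subspace_add)
  show "\<forall>x\<in>K \<inter> L. - x \<in> K \<inter> L" using assms(1) L_neg by (simp add: subspace_neg)
  show "\<exists>e>0. \<forall>x\<in>K \<inter> L. x \<noteq> 0 \<longrightarrow> e \<le> norm x"
    using int_vecs_norm_ge_1 L_int_vecs by (intro exI[of _ 1]) auto
qed (use assms in auto)

end

lemma obtain_indexed_basis:
  fixes A :: "(real^'k::finite) set"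
  obtains S :: "'k set" and \<beta> :: "'k \<Rightarrow> real^'k"
  where "\<beta> ` S \<subseteq> A" "inj_on \<beta> S" "independent (\<beta> ` S)" "span (\<beta> ` S) = span A"
proof -
  obtain B where B: "B \<subseteq> A" "independent B" "A \<subseteq> span B" "card B = dim A"
    using basis_exists[of A] by blast
  have "card B \<le> CARD('k)" using B(4) dim_subset_UNIV_cart[of A] by simp
  then obtain S :: "'k set" where S: "card S = card B" "finite S"
    using obtain_subset_with_card_n[of "card B" "UNIV :: 'k set"] by auto
  obtain \<beta> where \<beta>: "bij_betw \<beta> S B"
    using finite_same_card_bij[OF S(2) finiteI_independent[OF B(2)] S(1)] by blast
  have "span B = span A"
    using B(1,3) span_mono span_minimal[OF _ subspace_span] by blast
  then show ?thesis using that \<beta> B by (auto simp: bij_betw_def)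
qed

lemma bij_betw_vec_PiE:
  "bij_betw (\<lambda>h::'a^'k::finite. \<lambda>i. h$i) {h. \<forall>i. h$i \<in> A i} (PiE UNIV A)"
proof (rule bij_betwI[where g = "\<lambda>f. \<chi> i. f i"])
  show "(\<lambda>h::'a^'k. \<lambda>i. h$i) \<in> {h. \<forall>i. h$i \<in> A i} \<rightarrow> PiE UNIV A" by auto
  show "(\<lambda>f. \<chi> i. f i) \<in> PiE UNIV A \<rightarrow> {h::'a^'k. \<forall>i. h$i \<in> A i}" by auto
  show "(\<chi> i. x $ i) = x" for x :: "'a^'k" by (simp add: vec_eq_iff)
  show "(\<lambda>i. (\<chi> i. y i) $ i) = y" if "y \<in> PiE UNIV A" for y using that by auto
qed

lemma card_vec_set:
  assumes "\<And>i. finite (A i)"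
  shows "card {h::'a^'k::finite. \<forall>i. h$i \<in> A i} = (\<Prod>i\<in>UNIV. card (A i))"
  using bij_betw_same_card[OF bij_betw_vec_PiE[of A]] assms by (simp add: card_PiE)

lemma finite_vec_set:
  assumes "\<And>i. finite (A i)"
  shows "finite {h::'a^'k::finite. \<forall>i. h$i \<in> A i}"
  using bij_betw_finite[OF bij_betw_vec_PiE[of A]] assms by (simp add: finite_PiE)

definition dot_nat :: "real^'k::finite \<Rightarrow> nat^'k \<Rightarrow> real" where
  "dot_nat y h = (\<Sum>i\<in>UNIV. y$i * real (h$i))"

lemma dot_nat_simps [simp]:
  "dot_nat (x + y) h = dot_nat x h + dot_nat y h" "dot_nat (c *\<^sub>R x) h = c * dot_nat x h"
  unfolding dot_nat_def by (simp_all add: sum.distrib algebra_simps sum_distrib_left)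

lemma dot_nat_tendsto [tendsto_intros]:
  "(f \<longlongrightarrow> y) F \<Longrightarrow> ((\<lambda>x. dot_nat (f x) h) \<longlongrightarrow> dot_nat y h) F"
  unfolding dot_nat_def by (intro tendsto_intros)

lemma component_le_dot_nat:
  assumes "\<forall>i. 0 < y$i"
  shows "y$i * real (h$i) \<le> dot_nat y h"
  unfolding dot_nat_def using assms by (intro member_le_sum) (auto simp: less_imp_le)

lemma dot_nat_le_imp_component_le:
  assumes "\<forall>i. 0 < y$i" "dot_nat y h \<le> B"
  shows "real (h$i) \<le> B / y$i"
  using component_le_dot_nat[OF assms(1), of i h] assms by (simp add: field_simps mult.commute)

lemma sum_le_dot_nat:
  assumes "\<forall>i. 0 < y$i" "\<forall>i. 1 \<le> h$i"
  shows "(\<Sum>i\<in>UNIV. y$i) \<le> dot_nat y h"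
  unfolding dot_nat_def
proof (intro sum_mono)
  fix i
  show "y$i \<le> y$i * real (h$i)"
    using mult_left_mono[of 1 "real (h$i)" "y$i"] assms by (simp add: less_imp_le)
qed

text \<open>The inner sum over \<open>h\<close> of the lemma counts these points at \<open>y = b / N\<close>.\<close>
definition simplex_points :: "real^'k::finite \<Rightarrow> (nat^'k) set" where
  "simplex_points y = {h. (\<forall>i. 1 \<le> h$i) \<and> dot_nat y h \<le> 1}"

lemma simplex_points_subset:
  assumes "\<forall>i. 0 < y$i"
  shows "simplex_points y \<subseteq> {h. \<forall>i. h$i \<in> {1..nat \<lfloor>1 / y$i\<rfloor>}}"
  unfolding simplex_points_def
  using dot_nat_le_imp_component_le[OF assms] by (auto simp: le_nat_floor)

lemma finite_dot_nat_le:
  assumes "\<forall>i. 0 < y$i"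
  shows "finite {h. (\<forall>i. 1 \<le> h$i) \<and> dot_nat y h \<le> B}"
proof (rule finite_subset)
  show "{h. (\<forall>i. 1 \<le> h$i) \<and> dot_nat y h \<le> B} \<subseteq> {h. \<forall>i. h$i \<in> {..nat \<lceil>B / y$i\<rceil>}}"
  proof
    fix h assume "h \<in> {h. (\<forall>i. 1 \<le> h$i) \<and> dot_nat y h \<le> B}"
    then have hB: "dot_nat y h \<le> B" by simp
    have "real (h$i) \<le> real (nat \<lceil>B / y$i\<rceil>)" for i
      using dot_nat_le_imp_component_le[OF assms hB, of i] real_nat_ceiling_ge[of "B / y$i"]
      by linarith
    then show "h \<in> {h. \<forall>i. h$i \<in> {..nat \<lceil>B / y$i\<rceil>}}" by simp
  qed
  show "finite {h::nat^'a. \<forall>i. h$i \<in> {..nat \<lceil>B / y$i\<rceil>}}" by (rule finite_vec_set) simp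
qed

lemma card_simplex_points_le:
  fixes y :: "real^'k::finite"
  assumes pos: "\<forall>i. 0 < y$i"
  shows "real (card (simplex_points y)) \<le> (\<Prod>i\<in>UNIV. 1 / y$i)"
proof -
  have "card (simplex_points y) \<le> card {h::nat^'k. \<forall>i. h$i \<in> {1..nat \<lfloor>1 / y$i\<rfloor>}}"
    by (intro card_mono finite_vec_set simplex_points_subset pos) simp
  also have "\<dots> = (\<Prod>i\<in>UNIV. nat \<lfloor>1 / y$i\<rfloor>)"
    by (subst card_vec_set) auto
  finally have "real (card (simplex_points y)) \<le> (\<Prod>i\<in>UNIV. real (nat \<lfloor>1 / y$i\<rfloor>))"
    by (metis of_nat_le_iff of_nat_prod)
  also have "\<dots> \<le> (\<Prod>i\<in>UNIV. 1 / y$i)"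
    using pos by (intro prod_mono) (auto simp: less_imp_le)
  finally show ?thesis .
qed

lemma simplex_points_nonempty_iff:
  assumes "\<forall>i. 0 < y$i"
  shows "simplex_points y \<noteq> {} \<longleftrightarrow> (\<Sum>i\<in>UNIV. y$i) \<le> 1"
proof
  assume "simplex_points y \<noteq> {}"
  then obtain h where "\<forall>i. 1 \<le> h$i" "dot_nat y h \<le> 1" unfolding simplex_points_def by blast
  then show "(\<Sum>i\<in>UNIV. y$i) \<le> 1" using sum_le_dot_nat[OF assms] by fastforce
next
  assume "(\<Sum>i\<in>UNIV. y$i) \<le> 1"
  then have "(\<chi> i. 1) \<in> simplex_points y" by (simp add: simplex_points_def dot_nat_def)
  then show "simplex_points y \<noteq> {}" by blast
qed

lemma simplex_points_subset_of_half_le: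
  fixes y :: "real^'k::finite"
  assumes pos: "\<forall>i. 0 < y$i" and w: "\<forall>i. y$i / 2 < w$i"
  shows "simplex_points w \<subseteq> {h. \<forall>i. h$i \<in> {1..nat \<lceil>\<Sum>i\<in>UNIV. 2 / y$i\<rceil>}}"
proof
  fix h assume h: "h \<in> simplex_points w"
  have wpos: "\<forall>i. 0 < w$i" using w pos by (metis half_gt_zero less_trans)
  have "real (h$i) \<le> real (nat \<lceil>\<Sum>i\<in>UNIV. 2 / y$i\<rceil>)" for i
  proof -
    have "real (h$i) \<le> 1 / w$i"
      using dot_nat_le_imp_component_le[OF wpos] h by (simp add: simplex_points_def)
    also have "\<dots> = 2 / (2 * w$i)" by simp
    also have "\<dots> \<le> 2 / y$i"
      using w[rule_format, of i] pos wpos by (intro divide_left_mono) (auto simp: less_imp_le)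
    also have "\<dots> \<le> (\<Sum>i\<in>UNIV. 2 / y$i)"
      using pos by (intro member_le_sum) (auto simp: less_imp_le)
    also have "\<dots> \<le> real (nat \<lceil>\<Sum>i\<in>UNIV. 2 / y$i\<rceil>)" by (rule real_nat_ceiling_ge)
    finally show ?thesis .
  qed
  then show "h \<in> {h. \<forall>i. h$i \<in> {1..nat \<lceil>\<Sum>i\<in>UNIV. 2 / y$i\<rceil>}}"
    using h unfolding simplex_points_def by simp
qed

text \<open>Near \<open>y\<close> only the finitely many \<open>h\<close> above can occur, and for each of them \<open>y \<cdot> h \<noteq> 1\<close>
  decides membership robustly.\<close>
lemma eventually_simplex_points_eq:
  fixes y :: "real^'k::finite"
  assumes pos: "\<forall>i. 0 < y$i" and y: "\<forall>h. (\<forall>i. 1 \<le> h$i) \<longrightarrow> dot_nat y h \<noteq> 1"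
    and f: "(f \<longlongrightarrow> y) F"
  shows "eventually (\<lambda>x. simplex_points (f x) = simplex_points y) F"
proof -
  define H where "H = {h::nat^'k. \<forall>i. h$i \<in> {1..nat \<lceil>\<Sum>i\<in>UNIV. 2 / y$i\<rceil>}}"
  have "finite H" unfolding H_def by (intro finite_vec_set) simp
  have "\<forall>h\<in>H. eventually (\<lambda>x. dot_nat (f x) h \<le> 1 \<longleftrightarrow> dot_nat y h \<le> 1) F"
  proof
    fix h assume "h \<in> H"
    then consider "dot_nat y h < 1" | "1 < dot_nat y h"
      using y unfolding H_def by fastforce
    then show "eventually (\<lambda>x. dot_nat (f x) h \<le> 1 \<longleftrightarrow> dot_nat y h \<le> 1) F"
    proof cases
      case 1
      then show ?thesis
        using order_tendstoD(2)[OF dot_nat_tendsto[OF f] 1] by (auto elim: eventually_mono)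
    next
      case 2
      then show ?thesis
        using order_tendstoD(1)[OF dot_nat_tendsto[OF f] 2] by (auto elim: eventually_mono)
    qed
  qed
  then have "eventually (\<lambda>x. \<forall>h\<in>H. dot_nat (f x) h \<le> 1 \<longleftrightarrow> dot_nat y h \<le> 1) F"
    by (rule eventually_ball_finite[OF \<open>finite H\<close>])
  moreover have "eventually (\<lambda>x. \<forall>i. y$i / 2 < f x $ i) F"
    using pos by (intro eventually_all_finite order_tendstoD(1)[OF tendsto_vec_nth[OF f]]) simp
  ultimately show ?thesis
  proof eventually_elim
    case (elim x)
    have "y$i / 2 < y$i" for i using pos by simp
    then have "simplex_points (f x) \<union> simplex_points y \<subseteq> H"
      using simplex_points_subset_of_half_le[OF pos] elim(2) unfolding H_def by blast
    then show ?case using elim(1) unfolding simplex_points_def by blast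
  qed
qed

definition monom :: "('k::finite \<Rightarrow> nat) \<Rightarrow> real^'k \<Rightarrow> real" where
  "monom m y = (\<Prod>i\<in>UNIV. y$i ^ m i)"

lemma monom_scale: "monom m (c *\<^sub>R y) = c ^ (\<Sum>i\<in>UNIV. m i) * monom m y"
  unfolding monom_def by (simp add: power_mult_distrib prod.distrib power_sum)

lemma monom_tendsto [tendsto_intros]:
  "(f \<longlongrightarrow> y) F \<Longrightarrow> ((\<lambda>x. monom m (f x)) \<longlongrightarrow> monom m y) F"
  unfolding monom_def by (intro tendsto_intros)

lemma monom_pos: "\<forall>i. 0 < y$i \<Longrightarrow> 0 < monom m y"
  unfolding monom_def by (intro prod_pos) auto

lemma monom_le_prod:
  assumes "\<forall>i. 0 < m i" "\<forall>i. 0 < y$i \<and> y$i \<le> 1"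
  shows "monom m y \<le> (\<Prod>i\<in>UNIV. y$i)"
  unfolding monom_def using assms
  by (intro prod_mono) (auto simp: less_imp_le Suc_leI intro: power_decreasing[of 1, simplified])

lemma eventually_sgn_eq:
  fixes f :: "'a \<Rightarrow> real"
  assumes "(f \<longlongrightarrow> a) F" "a \<noteq> 0"
  shows "eventually (\<lambda>x. sgn (f x) = sgn a) F"
proof (cases "a > 0")
  case True
  have "eventually (\<lambda>x. f x > 0) F" using order_tendstoD(1)[OF assms(1) True] .
  then show ?thesis by eventually_elim (use True in simp)
next
  case False
  then have "a < 0" using assms(2) by simp
  have "eventually (\<lambda>x. f x < 0) F" using order_tendstoD(2)[OF assms(1) \<open>a < 0\<close>] .
  then show ?thesis by eventually_elim (use \<open>a < 0\<close> in simp)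
qed

lemma of_int_floor_mult_div_tendsto: "((\<lambda>N::real. of_int \<lfloor>N * x\<rfloor> / N) \<longlongrightarrow> x) at_top"
proof (rule tendsto_sandwich[where f = "\<lambda>N. x - inverse N" and h = "\<lambda>N. x"])
  show "eventually (\<lambda>N. x - inverse N \<le> of_int \<lfloor>N * x\<rfloor> / N) at_top"
    using eventually_gt_at_top[of "0::real"]
  proof eventually_elim
    case (elim N)
    have "(N * x - 1) / N \<le> of_int \<lfloor>N * x\<rfloor> / N"
      using elim real_of_int_floor_add_one_gt[of "N * x"] by (intro divide_right_mono) auto
    then show ?case using elim by (simp add: field_simps)
  qed
  show "eventually (\<lambda>N. of_int \<lfloor>N * x\<rfloor> / N \<le> x) at_top"
    using eventually_gt_at_top[of "0::real"]
    by eventually_elim (use of_int_floor_le[of "_ * x"] in \<open>simp add: field_simps\<close>)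
  show "((\<lambda>N. x - inverse N) \<longlongrightarrow> x) at_top"
    using tendsto_diff[OF tendsto_const tendsto_inverse_0_at_top[OF filterlim_ident]] by simp
qed simp

lemma negligible_linear_level_set:
  fixes \<phi> :: "real^'k::finite \<Rightarrow> real"
  assumes lin: "linear \<phi>" and nz: "\<phi> \<noteq> (\<lambda>_. 0) \<or> c \<noteq> 0"
  shows "negligible {z. \<phi> z = c}"
proof -
  define a where "a = adjoint \<phi> 1"
  have "\<phi> = (\<lambda>z. a \<bullet> z)"
    using adjoint_works[OF lin, of _ 1] by (auto simp: a_def inner_commute)
  moreover from this have "a \<noteq> 0 \<or> c \<noteq> 0" using nz by (auto simp: fun_eq_iff)
  ultimately show ?thesis using negligible_hyperplane[of a c] by simp
qed

lemma has_integral_indicator_cbox: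
  "(indicator (cbox a b) has_integral measure lborel (cbox a b)) (UNIV :: 'a::euclidean_space set)"
proof -
  have "((\<lambda>x. 1::real) has_integral measure lborel (cbox a b)) (cbox a b)"
    using has_integral_const[of "1::real" a b] by simp
  then have "((\<lambda>x. if x \<in> cbox a b then 1::real else 0) has_integral measure lborel (cbox a b)) UNIV"
    using has_integral_restrict_UNIV[of "cbox a b" "\<lambda>x. 1::real"] by simp
  moreover have "(\<lambda>x. if x \<in> cbox a b then 1::real else 0) = indicator (cbox a b)"
    by (simp add: fun_eq_iff indicator_def)
  ultimately show ?thesis by simp
qed

lemma eventually_at_imp_cbox:
  fixes z :: "'a::euclidean_space"
  assumes "eventually P (at z)" "P z"
  obtains a b where "0 < measure lborel (cbox a b)" "\<forall>x\<in>cbox a b. P x"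
proof -
  have "eventually P (nhds z)" using assms by (simp add: eventually_nhds_conv_at)
  then obtain S where S: "open S" "z \<in> S" "\<forall>x\<in>S. P x"
    unfolding eventually_nhds by blast
  obtain a b where ab: "cbox a b \<subseteq> S" "z \<in> box a b" "\<forall>i\<in>Basis. a \<bullet> i < b \<bullet> i"
    by (rule open_contains_cbox[OF S(1,2)])
  have "measure lborel (cbox a b) = (\<Prod>i\<in>Basis. (b - a) \<bullet> i)"
    using ab(3) by (simp add: measure_lborel_cbox_eq less_imp_le)
  also have "\<dots> > 0"
    using ab(3) by (intro prod_pos) (simp add: inner_diff_left)
  finally show ?thesis using that ab(1) S(3) by blast
qed

lemma smallo_of_tendsto_div:
  fixes f :: "real \<Rightarrow> real"
  assumes "((\<lambda>N. f N / N ^ d) \<longlongrightarrow> c) at_top"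
  shows "(\<lambda>N. f N - c * N ^ d) \<in> o[at_top](\<lambda>N. N ^ d)"
proof (rule smalloI_tendsto)
  have "((\<lambda>N. f N / N ^ d - c) \<longlongrightarrow> c - c) at_top"
    by (intro tendsto_intros assms)
  moreover have "eventually (\<lambda>N. f N / N ^ d - c = (f N - c * N ^ d) / N ^ d) at_top"
    using eventually_gt_at_top[of "0::real"] by eventually_elim (simp add: field_simps)
  ultimately show "((\<lambda>N. (f N - c * N ^ d) / N ^ d) \<longlongrightarrow> 0) at_top"
    by (simp add: Lim_transform_eventually)
  show "eventually (\<lambda>N::real. N ^ d \<noteq> 0) at_top"
    using eventually_gt_at_top[of "0::real"] by eventually_elim simp
qed

text \<open>Indexing the basis by a subset \<open>S\<close> of the coordinates lets coefficient vectors
  live in \<open>real^'k\<close> itself; the coordinates outside \<open>S\<close> are dummies.\<close>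
locale cell_count = index_lattice L for L :: "(real^'k::finite) set" +
  fixes W C :: "(real^'k) set" and m :: "'k \<Rightarrow> nat" and a0 :: "real^'k"
    and S :: "'k set" and \<beta> :: "'k \<Rightarrow> real^'k"
  assumes m_pos: "\<forall>i. 0 < m i"
    and subspace_W: "subspace W"
    and C_eq: "C = {b. \<forall>(I,J)\<in>wall_pairs. sgn (wall_form I J b) = sgn (wall_form I J a0)}"
    and C_subset: "C \<subseteq> W \<inter> pos_orthant"
    and aff_dim_C: "aff_dim C = int (dim W)"
    and basis_in_L: "\<beta> ` S \<subseteq> W \<inter> L"
    and inj_basis: "inj_on \<beta> S"
    and independent_basis: "independent (\<beta> ` S)"
    and span_basis: "span (\<beta> ` S) = W"
begin

definition \<sigma> :: "'k set \<times> 'k set \<Rightarrow> real" where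
  "\<sigma> p = sgn (wall_form (fst p) (snd p) a0)"

lemma C_iff: "y \<in> C \<longleftrightarrow> (\<forall>p\<in>wall_pairs. sgn (wall_form (fst p) (snd p) y) = \<sigma> p)"
  unfolding C_eq \<sigma>_def by auto

lemma C_nonempty: "C \<noteq> {}"
  using aff_dim_C by auto

lemma C_pos: "y \<in> C \<Longrightarrow> 0 < y$i"
  using C_subset unfolding pos_orthant_def by auto

lemma C_in_W: "y \<in> C \<Longrightarrow> y \<in> W"
  using C_subset by auto

lemma C_scale_iff: "0 < c \<Longrightarrow> c *\<^sub>R y \<in> C \<longleftrightarrow> y \<in> C"
  by (simp add: C_iff sgn_mult)

lemma finite_wall_pairs: "finite (wall_pairs :: ('k set \<times> 'k set) set)"
  by (rule finite_subset[OF subset_UNIV]) simp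

text \<open>Since \<open>C\<close> has full dimension in \<open>W\<close>, a wall form vanishing on \<open>C\<close> vanishes on \<open>W\<close>.\<close>
lemma wall_form_eq_0_if_sigma_eq_0:
  assumes p: "\<sigma> p = 0" "p \<in> wall_pairs" and y: "y \<in> W"
  shows "wall_form (fst p) (snd p) y = 0"
proof -
  define H where "H = {x. wall_form (fst p) (snd p) x = 0}"
  have "affine H" unfolding H_def affine_def by (auto simp flip: scaleR_add_left)
  moreover have "C \<subseteq> H"
  proof
    fix c assume "c \<in> C"
    then have "sgn (wall_form (fst p) (snd p) c) = \<sigma> p" using p(2) C_iff by auto
    then show "c \<in> H" using p(1) by (simp add: H_def sgn_zero_iff)
  qed
  ultimately have "affine hull C \<subseteq> H" by (simp add: hull_minimal)
  moreover have "affine hull C = W"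
  proof (rule affine_dim_equal)
    show "affine W" using subspace_W subspace_imp_affine by blast
    show "affine hull C \<subseteq> W" using C_subset \<open>affine W\<close> by (simp add: hull_minimal)
    show "aff_dim (affine hull C) = aff_dim W"
      using aff_dim_C aff_dim_subspace[OF subspace_W] by simp
  qed (use C_nonempty in auto)
  ultimately show ?thesis using y H_def by auto
qed

lemma eventually_in_C:
  assumes y: "y \<in> C" and f: "(f \<longlongrightarrow> y) F" and fW: "\<And>x. f x \<in> W"
  shows "eventually (\<lambda>x. f x \<in> C) F"
proof -
  have "\<forall>p\<in>wall_pairs. eventually (\<lambda>x. sgn (wall_form (fst p) (snd p) (f x)) = \<sigma> p) F"
  proof
    fix p :: "'k set \<times> 'k set" assume p: "p \<in> wall_pairs"
    show "eventually (\<lambda>x. sgn (wall_form (fst p) (snd p) (f x)) = \<sigma> p) F"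
    proof (cases "\<sigma> p = 0")
      case True
      then show ?thesis using wall_form_eq_0_if_sigma_eq_0[OF True p fW] by simp
    next
      case False
      have sg: "sgn (wall_form (fst p) (snd p) y) = \<sigma> p" using y p C_iff by auto
      then have "wall_form (fst p) (snd p) y \<noteq> 0" using False by auto
      from eventually_sgn_eq[OF wall_form_tendsto[OF f] this] show ?thesis using sg by simp
    qed
  qed
  then have "eventually (\<lambda>x. \<forall>p\<in>wall_pairs. sgn (wall_form (fst p) (snd p) (f x)) = \<sigma> p) F"
    by (rule eventually_ball_finite[OF finite_wall_pairs])
  then show ?thesis by eventually_elim (simp add: C_iff)
qed

lemma eventually_not_in_C:
  assumes y: "y \<in> W" "y \<notin> C"
    and nz: "\<forall>p\<in>wall_pairs. \<sigma> p \<noteq> 0 \<longrightarrow> wall_form (fst p) (snd p) y \<noteq> 0"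
    and f: "(f \<longlongrightarrow> y) F"
  shows "eventually (\<lambda>x. f x \<notin> C) F"
proof -
  obtain p where p: "p \<in> wall_pairs" "sgn (wall_form (fst p) (snd p) y) \<noteq> \<sigma> p"
    using y(2) C_iff by auto
  then have "\<sigma> p \<noteq> 0" using wall_form_eq_0_if_sigma_eq_0[OF _ p(1) y(1)] by force
  then have "wall_form (fst p) (snd p) y \<noteq> 0" using nz p(1) by blast
  from eventually_sgn_eq[OF wall_form_tendsto[OF f] this]
  show ?thesis
  proof eventually_elim
    case (elim x)
    show ?case
    proof
      assume "f x \<in> C"
      then show False using elim p C_iff by auto
    qed
  qed
qed

text \<open>The summand of the lemma as a function of \<open>y = b / N\<close>, up to the factor \<open>N\<^sup>|\<^sup>m\<^sup>|\<close>.\<close>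
definition density :: "real^'k \<Rightarrow> real" where
  "density y = (if y \<in> C then monom m y * real (card (simplex_points y)) else 0)"

lemma density_nonneg: "0 \<le> density y"
  unfolding density_def monom_def using C_pos
  by (auto intro!: mult_nonneg_nonneg prod_nonneg simp: less_imp_le)

lemma density_nonzero_imp:
  assumes "density y \<noteq> 0"
  shows "y \<in> C" "(\<Sum>i\<in>UNIV. y$i) \<le> 1" "norm y \<le> 1"
proof -
  show yC: "y \<in> C" using assms unfolding density_def by (auto split: if_splits)
  then have "simplex_points y \<noteq> {}" using assms unfolding density_def by auto
  then show sum: "(\<Sum>i\<in>UNIV. y$i) \<le> 1" using simplex_points_nonempty_iff C_pos[OF yC] by blast
  show "norm y \<le> 1" using norm_le_l1_cart[of y] C_pos[OF yC] sum by (simp add: less_imp_le)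
qed

lemma density_le_1: "density y \<le> 1"
proof (cases "density y = 0")
  case False
  have yC: "y \<in> C" and sum: "(\<Sum>i\<in>UNIV. y$i) \<le> 1" using density_nonzero_imp[OF False] by auto
  have pos: "\<forall>i. 0 < y$i" using C_pos[OF yC] by auto
  have "y$i \<le> 1" for i
    using pos sum member_le_sum[of i UNIV "\<lambda>i. y$i"] by (simp add: less_imp_le)
  then have "density y \<le> (\<Prod>i\<in>UNIV. y$i) * (\<Prod>i\<in>UNIV. 1 / y$i)"
    using yC pos monom_le_prod[OF m_pos] card_simplex_points_le[OF pos] monom_pos[OF pos]
    by (simp add: density_def) (intro mult_mono; simp add: prod_nonneg less_imp_le)
  also have "\<dots> = 1" using pos by (simp add: prod.distrib[symmetric] less_imp_neq[symmetric])
  finally show ?thesis .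
qed simp

lemma monom_le_density:
  assumes "y \<in> C" "(\<Sum>i\<in>UNIV. y$i) \<le> 1"
  shows "monom m y \<le> density y"
proof -
  have "simplex_points y \<noteq> {}" using assms simplex_points_nonempty_iff C_pos by blast
  then have "1 \<le> card (simplex_points y)"
    using finite_dot_nat_le[of y 1] C_pos[OF assms(1)]
    by (simp add: simplex_points_def Suc_le_eq card_gt_0_iff)
  then show ?thesis using assms(1) monom_pos[of y m] C_pos by (simp add: density_def)
qed

text \<open>Where the density may jump; \<open>\<sigma> p \<noteq> 0\<close> means that the wall \<open>p\<close> does not contain \<open>C\<close>.\<close>
definition jump_set :: "(real^'k) set" where
  "jump_set = {y. (\<exists>p\<in>wall_pairs. \<sigma> p \<noteq> 0 \<and> wall_form (fst p) (snd p) y = 0) \<or>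
                 (\<exists>h::nat^'k. (\<forall>i. 1 \<le> h$i) \<and> dot_nat y h = 1)}"

lemma density_tendsto:
  assumes y: "y \<in> W" "y \<notin> jump_set" and f: "(f \<longlongrightarrow> y) F" and fW: "\<And>x. f x \<in> W"
  shows "((\<lambda>x. density (f x)) \<longlongrightarrow> density y) F"
proof (cases "y \<in> C")
  case True
  have "eventually (\<lambda>x. simplex_points (f x) = simplex_points y) F"
    using y(2) C_pos[OF True] by (intro eventually_simplex_points_eq f) (auto simp: jump_set_def)
  with eventually_in_C[OF True f fW]
  have "eventually (\<lambda>x. monom m (f x) * real (card (simplex_points y)) = density (f x)) F"
    by eventually_elim (simp add: density_def)
  moreover have "((\<lambda>x. monom m (f x) * real (card (simplex_points y))) \<longlongrightarrow> density y) F"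
    using True by (simp add: density_def) (intro tendsto_intros f)
  ultimately show ?thesis by (rule Lim_transform_eventually[rotated])
next
  case False
  have "eventually (\<lambda>x. f x \<notin> C) F"
    using y by (intro eventually_not_in_C[OF _ False _ f]) (auto simp: jump_set_def)
  then have "eventually (\<lambda>x. 0 = density (f x)) F"
    by eventually_elim (simp add: density_def)
  then show ?thesis
    using False by (simp add: density_def Lim_transform_eventually[OF tendsto_const])
qed

definition comb :: "real^'k \<Rightarrow> real^'k" where
  "comb z = (\<Sum>i\<in>S. z$i *\<^sub>R \<beta> i)"

definition int_coeffs :: "(real^'k) set" where
  "int_coeffs = {t. (\<forall>i\<in>S. t$i \<in> \<int>) \<and> (\<forall>i. i \<notin> S \<longrightarrow> t$i = 0)}"

text \<open>Representatives of \<open>W \<inter> L\<close> modulo the lattice \<open>comb ` int_coeffs\<close>: its points in the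
  half-open fundamental parallelepiped of the basis.\<close>
definition reps :: "(real^'k) set" where
  "reps = {r \<in> W \<inter> L. \<exists>s. (\<forall>i\<in>S. 0 \<le> s$i \<and> s$i < 1) \<and> r = comb s}"

lemma finite_S: "finite S"
  by (rule finite_subset[OF subset_UNIV]) simp

lemma comb_simps [simp]:
  "comb 0 = 0" "comb (x + y) = comb x + comb y" "comb (x - y) = comb x - comb y"
  "comb (c *\<^sub>R x) = c *\<^sub>R comb x"
  by (simp_all add: comb_def scaleR_add_left sum.distrib scaleR_diff_left sum_subtractf
      scaleR_sum_right)

lemma linear_comb: "linear comb"
  by (rule linearI) simp_all

lemma comb_tendsto [tendsto_intros]: "(f \<longlongrightarrow> w) F \<Longrightarrow> ((\<lambda>x. comb (f x)) \<longlongrightarrow> comb w) F"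
  unfolding comb_def by (intro tendsto_intros)

lemma comb_in_W: "comb z \<in> W"
proof -
  have "comb z \<in> span (\<beta> ` S)" unfolding comb_def by (intro span_sum span_scale span_base) auto
  then show ?thesis using span_basis by simp
qed

lemma comb_in_L: "t \<in> int_coeffs \<Longrightarrow> comb t \<in> L"
  unfolding comb_def int_coeffs_def using basis_in_L finite_S by (intro L_sum L_int_scale) auto

lemma comb_cong: "(\<And>i. i \<in> S \<Longrightarrow> z$i = z'$i) \<Longrightarrow> comb z = comb z'"
  unfolding comb_def by simp

lemma comb_eq_0_imp:
  assumes z: "\<forall>i. i \<notin> S \<longrightarrow> z$i = 0" and "comb z = 0"
  shows "z = 0"
proof -
  define c where "c v = z $ (inv_into S \<beta> v)" for v
  have "(\<Sum>v\<in>\<beta> ` S. c v *\<^sub>R v) = (\<Sum>i\<in>S. c (\<beta> i) *\<^sub>R \<beta> i)"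
    by (rule sum.reindex[OF inj_basis, unfolded comp_def])
  also have "\<dots> = comb z" unfolding comb_def c_def using inj_basis by (intro sum.cong) auto
  finally have "\<forall>v\<in>\<beta> ` S. c v = 0"
    using independent_basis assms(2) by (simp add: independent_explicit)
  then have "\<forall>i\<in>S. z$i = 0" unfolding c_def using inj_basis by auto
  then show ?thesis using z by (simp add: vec_eq_iff) metis
qed

lemma obtain_comb:
  assumes "y \<in> W"
  obtains z where "\<forall>i. i \<notin> S \<longrightarrow> z$i = 0" "y = comb z"
proof -
  have "y \<in> span (\<beta> ` S)" using assms span_basis by simp
  then obtain u where u: "y = (\<Sum>v\<in>\<beta> ` S. u v *\<^sub>R v)"
    using span_finite[of "\<beta> ` S"] finite_S by auto
  define z where "z = (\<chi> i. if i \<in> S then u (\<beta> i) else 0)"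
  have "y = (\<Sum>i\<in>S. u (\<beta> i) *\<^sub>R \<beta> i)"
    using u sum.reindex[OF inj_basis, of "\<lambda>v. u v *\<^sub>R v"] by simp
  also have "\<dots> = comb z" unfolding comb_def z_def by simp
  finally show ?thesis using that[of z] by (simp add: z_def)
qed

lemma comb_bounded_below: "\<exists>e>0. \<forall>w. (\<forall>i. i \<notin> S \<longrightarrow> w$i = 0) \<longrightarrow> e * norm w \<le> norm (comb w)"
proof -
  define Z where "Z = {w::real^'k. \<forall>i. i \<notin> S \<longrightarrow> w$i = 0}"
  have "subspace Z" unfolding Z_def subspace_def by auto
  then have "\<exists>e>0. \<forall>x\<in>Z. e * norm x \<le> norm (comb x)"
    using linear_comb comb_eq_0_imp
    by (intro injective_imp_isometric closed_subspace) (auto simp: Z_def linear_conv_bounded_linear)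
  then show ?thesis unfolding Z_def by blast
qed

lemma card_S: "card S = dim W"
  using dim_span_eq_card_independent[OF independent_basis] card_image[OF inj_basis] span_basis
  by simp

lemma reps_in_W: "r \<in> reps \<Longrightarrow> r \<in> W"
  unfolding reps_def by auto

lemma zero_in_reps: "0 \<in> reps"
  unfolding reps_def using subspace_W L_zero by (auto simp: subspace_0 intro!: exI[of _ 0])

lemma finite_reps: "finite reps"
proof -
  define B where "B = (\<Sum>i\<in>S. norm (\<beta> i))"
  have "reps \<subseteq> {x. x \<in> int_vecs \<and> norm x \<le> B}"
  proof
    fix r assume "r \<in> reps"
    then obtain s where s: "\<forall>i\<in>S. 0 \<le> s$i \<and> s$i < 1" "r = comb s" "r \<in> L"
      unfolding reps_def by blast
    have "norm r \<le> (\<Sum>i\<in>S. norm (s$i *\<^sub>R \<beta> i))" unfolding s(2) comb_def by (rule norm_sum)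
    also have "\<dots> \<le> B" unfolding B_def
      using s(1) by (intro sum_mono) (auto intro!: mult_left_le_one_le)
    finally show "r \<in> {x. x \<in> int_vecs \<and> norm x \<le> B}" using s(3) L_int_vecs by auto
  qed
  then show ?thesis using finite_int_vecs_norm_le finite_subset by blast
qed

lemma reps_add_comb_in_W_L: "r \<in> reps \<Longrightarrow> t \<in> int_coeffs \<Longrightarrow> r + comb t \<in> W \<inter> L"
  unfolding reps_def using comb_in_W comb_in_L L_add subspace_W by (auto simp: subspace_add)

lemma obtain_reps_decomp:
  assumes y: "y \<in> W \<inter> L"
  obtains r t where "r \<in> reps" "t \<in> int_coeffs" "y = r + comb t"
proof -
  obtain z where z: "\<forall>i. i \<notin> S \<longrightarrow> z$i = 0" "y = comb z" using obtain_comb y by blast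
  define t :: "real^'k" where "t = (\<chi> i. if i \<in> S then of_int \<lfloor>z$i\<rfloor> else 0)"
  have t: "t \<in> int_coeffs" unfolding t_def int_coeffs_def by auto
  have "\<forall>i\<in>S. 0 \<le> (z - t)$i \<and> (z - t)$i < 1"
    unfolding t_def by (simp add: frac_lt_1 flip: frac_def)
  moreover have "y - comb t = comb (z - t)" using z by simp
  moreover have "y - comb t \<in> W \<inter> L"
    using y comb_in_W comb_in_L[OF t] L_diff subspace_W by (auto simp: subspace_diff)
  ultimately have "y - comb t \<in> reps" unfolding reps_def by blast
  then show ?thesis using that t by force
qed

lemma reps_decomp_unique:
  assumes r: "r \<in> reps" "r' \<in> reps" and t: "t \<in> int_coeffs" "t' \<in> int_coeffs"
    and eq: "r + comb t = r' + comb t'"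
  shows "r = r' \<and> t = t'"
proof -
  obtain s where s: "\<forall>i\<in>S. 0 \<le> s$i \<and> s$i < 1" "r = comb s" using r(1) unfolding reps_def by blast
  obtain s' where s': "\<forall>i\<in>S. 0 \<le> s'$i \<and> s'$i < 1" "r' = comb s'" using r(2) unfolding reps_def by blast
  define u where "u = (\<chi> i. if i \<in> S then (s + t - s' - t')$i else 0)"
  have "comb u = comb (s + t - s' - t')" unfolding u_def by (rule comb_cong) simp
  also have "\<dots> = 0" using eq s s' by (simp add: algebra_simps)
  finally have "u = 0" using comb_eq_0_imp[of u] unfolding u_def by simp
  have st: "s$i + t$i = s'$i + t'$i" if "i \<in> S" for i
  proof -
    have "u$i = 0" using \<open>u = 0\<close> by simp
    then show ?thesis using that unfolding u_def by simp
  qed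
  have "t$i = t'$i" for i
  proof (cases "i \<in> S")
    case True
    then have "t$i \<in> \<int>" "t'$i \<in> \<int>" using t unfolding int_coeffs_def by auto
    then obtain k k' where k: "t$i = of_int k" "t'$i = of_int k'" by (meson Ints_cases)
    have "\<lfloor>s$i + t$i\<rfloor> = k" using s True k by (intro floor_unique) auto
    moreover have "\<lfloor>s'$i + t'$i\<rfloor> = k'" using s' True k by (intro floor_unique) auto
    ultimately have "k = k'" using st[OF True] by simp
    then show ?thesis using k by simp
  next
    case False
    then show ?thesis using t by (simp add: int_coeffs_def)
  qed
  then have "t = t'" by (simp add: vec_eq_iff)
  then show ?thesis using eq by simp
qed

lemma nat_floor_in_C_L:
  assumes "y \<in> C \<inter> L"
  shows "real (nat \<lfloor>y$k\<rfloor>) = y$k" "1 \<le> nat \<lfloor>y$k\<rfloor>"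
proof -
  have "y$k \<in> \<int>" using L_int_vecs assms unfolding int_vecs_def by auto
  then obtain z where "y$k = of_int z" using Ints_cases by blast
  then show "real (nat \<lfloor>y$k\<rfloor>) = y$k" "1 \<le> nat \<lfloor>y$k\<rfloor>" using C_pos[of y k] assms by simp_all
qed

lemma norm_le_dot_nat:
  assumes "y \<in> C" "\<forall>i. 1 \<le> h$i"
  shows "norm y \<le> dot_nat y h"
  using norm_le_l1_cart[of y] sum_le_dot_nat[of y h] C_pos[OF assms(1)] assms(2)
  by (simp add: less_imp_le)

lemma wall_sum_eq_sum_C_L:
  "wall_sum C L m N = (\<Sum>y\<in>{y \<in> C \<inter> L. norm y \<le> N}.
      monom m y * real (card {h. (\<forall>i. 1 \<le> h$i) \<and> dot_nat y h \<le> N}))"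
proof -
  define Y where "Y = {y \<in> C \<inter> L. norm y \<le> N}"
  define H where "H y = {h::nat^'k. (\<forall>i. 1 \<le> h$i) \<and> dot_nat y h \<le> N}" for y
  have "finite Y"
    by (rule finite_subset[OF _ finite_int_vecs_norm_le[of N]]) (auto simp: Y_def L_int_vecs)
  moreover have "finite (H y)" if "y \<in> Y" for y
    using finite_dot_nat_le C_pos that by (auto simp: Y_def H_def)
  ultimately have "(\<Sum>(y,h)\<in>Sigma Y H. monom m y) = (\<Sum>y\<in>Y. monom m y * real (card (H y)))"
    by (simp add: sum.Sigma[symmetric] mult.commute)
  moreover have "wall_sum C L m N = (\<Sum>(y,h)\<in>Sigma Y H. monom m y)"
    unfolding wall_sum_def
  proof (rule sum.reindex_bij_witness[where i = "\<lambda>(y,h). ((\<chi> k. nat \<lfloor>y$k\<rfloor>), h)"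
        and j = "\<lambda>(b,h). (real_vec b, h)"])
    fix a assume "a \<in> Sigma Y H"
    then show "(case (case a of (y, h) \<Rightarrow> (\<chi> k. nat \<lfloor>y$k\<rfloor>, h)) of (b, h) \<Rightarrow> (real_vec b, h)) = a"
      and "(case a of (y, h) \<Rightarrow> (\<chi> k. nat \<lfloor>y$k\<rfloor>, h)) \<in> {(b, h).
        (\<forall>i. 1 \<le> b$i \<and> 1 \<le> h$i) \<and> real (\<Sum>i\<in>UNIV. b$i * h$i) \<le> N \<and> real_vec b \<in> C \<inter> L}"
      using nat_floor_in_C_L by (auto simp: Y_def H_def dot_nat_def real_vec_def vec_eq_iff)
  next
    fix a assume "a \<in> {(b, h). (\<forall>i. 1 \<le> b$i \<and> 1 \<le> h$i) \<and>
        real (\<Sum>i\<in>UNIV. b$i * h$i) \<le> N \<and> real_vec b \<in> C \<inter> L}"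
    then show "(case (case a of (b, h) \<Rightarrow> (real_vec b, h)) of (y, h) \<Rightarrow> (\<chi> k. nat \<lfloor>y$k\<rfloor>, h)) = a"
      and "(case a of (b, h) \<Rightarrow> (real_vec b, h)) \<in> Sigma Y H"
      and "(case (case a of (b, h) \<Rightarrow> (real_vec b, h)) of (y, h) \<Rightarrow> monom m y) =
           (case a of (b, h) \<Rightarrow> \<Prod>i\<in>UNIV. real (b$i) ^ m i)"
      using norm_le_dot_nat[of "real_vec (fst a)" "snd a"]
      by (auto simp: Y_def H_def dot_nat_def real_vec_def monom_def vec_eq_iff)
  qed
  ultimately show ?thesis by (simp add: Y_def H_def)
qed

definition lattice_ball :: "real \<Rightarrow> (real^'k) set" where
  "lattice_ball N = {y \<in> W \<inter> L. norm y \<le> N}"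

lemma finite_lattice_ball: "finite (lattice_ball N)"
  by (rule finite_subset[OF _ finite_int_vecs_norm_le[of N]]) (auto simp: lattice_ball_def L_int_vecs)

lemma wall_sum_rescaled:
  assumes N: "0 < N"
  shows "wall_sum C L m N = N ^ (\<Sum>i\<in>UNIV. m i) * (\<Sum>y\<in>lattice_ball N. density ((1/N) *\<^sub>R y))"
proof -
  have "monom m y * real (card {h. (\<forall>i. 1 \<le> h$i) \<and> dot_nat y h \<le> N}) =
      N ^ (\<Sum>i\<in>UNIV. m i) * density ((1/N) *\<^sub>R y)" if "y \<in> C" for y
  proof -
    have "{h. (\<forall>i. 1 \<le> h$i) \<and> dot_nat y h \<le> N} = simplex_points ((1/N) *\<^sub>R y)"
      using N by (simp add: simplex_points_def divide_le_eq_1)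
    moreover have "monom m y = N ^ (\<Sum>i\<in>UNIV. m i) * monom m ((1/N) *\<^sub>R y)"
      using monom_scale[of m N "(1/N) *\<^sub>R y"] N by simp
    ultimately show ?thesis using that C_scale_iff[of "1/N" y] N by (simp add: density_def)
  qed
  then have "wall_sum C L m N =
      (\<Sum>y\<in>{y \<in> C \<inter> L. norm y \<le> N}. N ^ (\<Sum>i\<in>UNIV. m i) * density ((1/N) *\<^sub>R y))"
    unfolding wall_sum_eq_sum_C_L by (intro sum.cong) auto
  also have "\<dots> = N ^ (\<Sum>i\<in>UNIV. m i) * (\<Sum>y\<in>lattice_ball N. density ((1/N) *\<^sub>R y))"
    unfolding sum_distrib_left[symmetric]
    using N C_in_W C_scale_iff[of "1/N"]
    by (intro arg_cong[where f = "(*) _"] sum.mono_neutral_left finite_lattice_ball)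
      (auto simp: lattice_ball_def density_def)
  finally show ?thesis .
qed

definition ball_coeffs :: "real \<Rightarrow> real^'k \<Rightarrow> (real^'k) set" where
  "ball_coeffs N r = {t \<in> int_coeffs. norm (r + comb t) \<le> N}"

lemma finite_ball_coeffs:
  assumes r: "r \<in> reps"
  shows "finite (ball_coeffs N r)"
proof (rule finite_imageD)
  show "inj_on (\<lambda>t. r + comb t) (ball_coeffs N r)"
    using reps_decomp_unique[OF r r] unfolding ball_coeffs_def inj_on_def by blast
  have "(\<lambda>t. r + comb t) ` ball_coeffs N r \<subseteq> lattice_ball N"
    unfolding ball_coeffs_def lattice_ball_def using reps_add_comb_in_W_L[OF r] by auto
  then show "finite ((\<lambda>t. r + comb t) ` ball_coeffs N r)"
    using finite_lattice_ball finite_subset by blast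
qed

lemma sum_lattice_ball_eq:
  "(\<Sum>y\<in>lattice_ball N. f y) = (\<Sum>r\<in>reps. \<Sum>t\<in>ball_coeffs N r. f (r + comb t))"
proof -
  have "bij_betw (\<lambda>(r,t). r + comb t) (Sigma reps (ball_coeffs N)) (lattice_ball N)"
  proof (rule bij_betw_imageI)
    show "inj_on (\<lambda>(r, t). r + comb t) (Sigma reps (ball_coeffs N))"
      unfolding inj_on_def ball_coeffs_def using reps_decomp_unique by auto
    show "(\<lambda>(r, t). r + comb t) ` Sigma reps (ball_coeffs N) = lattice_ball N"
    proof
      show "(\<lambda>(r, t). r + comb t) ` Sigma reps (ball_coeffs N) \<subseteq> lattice_ball N"
        unfolding ball_coeffs_def lattice_ball_def using reps_add_comb_in_W_L by auto
      show "lattice_ball N \<subseteq> (\<lambda>(r, t). r + comb t) ` Sigma reps (ball_coeffs N)"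
      proof
        fix y assume y: "y \<in> lattice_ball N"
        then obtain r t where "r \<in> reps" "t \<in> int_coeffs" "y = r + comb t"
          using obtain_reps_decomp[of y] unfolding lattice_ball_def by blast
        with y show "y \<in> (\<lambda>(r, t). r + comb t) ` Sigma reps (ball_coeffs N)"
          unfolding ball_coeffs_def lattice_ball_def by force
      qed
    qed
  qed
  then have "(\<Sum>y\<in>lattice_ball N. f y) = (\<Sum>(r,t)\<in>Sigma reps (ball_coeffs N). f (r + comb t))"
    by (simp add: sum.reindex_bij_betw[symmetric] case_prod_beta')
  also have "\<dots> = (\<Sum>r\<in>reps. \<Sum>t\<in>ball_coeffs N r. f (r + comb t))"
    using finite_reps finite_ball_coeffs by (intro sum.Sigma[symmetric]) auto
  finally show ?thesis .
qed

text \<open>The sum over \<open>t\<close> is the integral of a step function of \<open>z\<close>, constant on the grid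
  cells \<open>\<lfloor>N z\<rfloor> = t\<close> of side \<open>1/N\<close> in the coordinates in \<open>S\<close>; the dummy coordinates
  range over \<open>[0,1)\<close> and contribute volume \<open>1\<close>.\<close>
definition floor_coeffs :: "real \<Rightarrow> real^'k \<Rightarrow> real^'k" where
  "floor_coeffs N z = (\<chi> i. if i \<in> S then of_int \<lfloor>N * z$i\<rfloor> else 0)"

definition dummies_in_unit :: "real^'k \<Rightarrow> bool" where
  "dummies_in_unit z \<longleftrightarrow> (\<forall>i. i \<notin> S \<longrightarrow> 0 \<le> z$i \<and> z$i < 1)"

definition grid_cell :: "real \<Rightarrow> real^'k \<Rightarrow> (real^'k) set" where
  "grid_cell N t = {z. dummies_in_unit z \<and> floor_coeffs N z = t}"

definition step_density :: "real \<Rightarrow> real^'k \<Rightarrow> real^'k \<Rightarrow> real" where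
  "step_density N r z =
     (if dummies_in_unit z then density ((1/N) *\<^sub>R (r + comb (floor_coeffs N z))) else 0)"

lemma floor_coeffs_in_int_coeffs: "floor_coeffs N z \<in> int_coeffs"
  unfolding floor_coeffs_def int_coeffs_def by auto

lemma grid_cell_between_boxes:
  assumes N: "0 < N" and t: "t \<in> int_coeffs"
  defines "a \<equiv> \<chi> i. if i \<in> S then t$i / N else 0"
    and "b \<equiv> \<chi> i. if i \<in> S then (t$i + 1) / N else 1"
  shows "box a b \<subseteq> grid_cell N t" "grid_cell N t \<subseteq> cbox a b"
proof -
  have t_int: "t$i \<in> \<int>" if "i \<in> S" for i using t that unfolding int_coeffs_def by auto
  have t_0: "t$i = 0" if "i \<notin> S" for i using t that unfolding int_coeffs_def by auto
  show "box a b \<subseteq> grid_cell N t"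
  proof
    fix z assume z: "z \<in> box a b"
    have zi: "a$i < z$i \<and> z$i < b$i" for i using z mem_box_cart(1) by blast
    have "floor_coeffs N z $ i = t $ i" for i
    proof (cases "i \<in> S")
      case True
      obtain k where k: "t$i = of_int k" using t_int[OF True] Ints_cases by blast
      have "t$i < N * z$i" "N * z$i < t$i + 1"
        using zi[of i] True N unfolding a_def b_def by (auto simp: field_simps)
      then have "\<lfloor>N * z$i\<rfloor> = k" using k by (intro floor_unique) auto
      then show ?thesis using True k unfolding floor_coeffs_def by simp
    qed (simp add: floor_coeffs_def t_0)
    moreover have "dummies_in_unit z"
      unfolding dummies_in_unit_def
    proof (intro allI impI)
      fix i assume "i \<notin> S"
      then show "0 \<le> z$i \<and> z$i < 1" using zi[of i] unfolding a_def b_def by simp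
    qed
    ultimately show "z \<in> grid_cell N t" unfolding grid_cell_def by (simp add: vec_eq_iff)
  qed
  show "grid_cell N t \<subseteq> cbox a b"
  proof
    fix z assume z: "z \<in> grid_cell N t"
    have "a$i \<le> z$i \<and> z$i \<le> b$i" for i
    proof (cases "i \<in> S")
      case True
      have "of_int \<lfloor>N * z$i\<rfloor> = t$i" using z True unfolding grid_cell_def floor_coeffs_def by auto
      then have "t$i \<le> N * z$i" "N * z$i \<le> t$i + 1"
        by (metis of_int_floor_le, metis real_of_int_floor_add_one_gt less_imp_le)
      then show ?thesis using True N unfolding a_def b_def by (auto simp: field_simps)
    next
      case False
      then show ?thesis using z unfolding grid_cell_def dummies_in_unit_def a_def b_def by auto
    qed
    then show "z \<in> cbox a b" using mem_box_cart(2) by blast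
  qed
qed

lemma grid_cell_has_integral:
  assumes N: "0 < N" and t: "t \<in> int_coeffs"
  shows "(indicator (grid_cell N t) has_integral (1/N) ^ card S) UNIV"
proof -
  define a :: "real^'k" where "a = (\<chi> i. if i \<in> S then t$i / N else 0)"
  define b :: "real^'k" where "b = (\<chi> i. if i \<in> S then (t$i + 1) / N else 1)"
  have "a \<in> cbox a b" unfolding a_def b_def mem_box_cart(2) using N by (auto simp: divide_right_mono)
  then have "measure lborel (cbox a b) = (\<Prod>i\<in>UNIV. b$i - a$i)"
    by (intro content_cbox_cart) blast
  also have "\<dots> = (\<Prod>i\<in>UNIV. if i \<in> S then 1 / N else 1)"
    unfolding a_def b_def using N by (intro prod.cong) (auto simp: field_simps)
  also have "\<dots> = (1/N) ^ card S"
    by (simp add: prod.If_cases Int_def)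
  finally have "(indicator (cbox a b) has_integral (1/N) ^ card S) UNIV"
    using has_integral_indicator_cbox[of a b] by simp
  then show ?thesis
    using grid_cell_between_boxes[OF N t] unfolding a_def b_def
    by (elim has_integral_spike[OF negligible_frontier_interval, rotated]) (auto simp: indicator_def)
qed

lemma step_density_eq_sum:
  assumes N: "0 < N" and r: "r \<in> reps"
  shows "step_density N r z =
    (\<Sum>t\<in>ball_coeffs N r. density ((1/N) *\<^sub>R (r + comb t)) * indicator (grid_cell N t) z)"
proof (cases "dummies_in_unit z")
  case True
  let ?t = "floor_coeffs N z"
  have "(\<Sum>t\<in>ball_coeffs N r. density ((1/N) *\<^sub>R (r + comb t)) * indicator (grid_cell N t) z) =
        (\<Sum>t\<in>ball_coeffs N r. if ?t = t then density ((1/N) *\<^sub>R (r + comb t)) else 0)"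
    using True by (intro sum.cong) (auto simp: grid_cell_def indicator_def)
  also have "\<dots> = (if ?t \<in> ball_coeffs N r then density ((1/N) *\<^sub>R (r + comb ?t)) else 0)"
    using finite_ball_coeffs[OF r] by (rule sum.delta')
  also have "\<dots> = density ((1/N) *\<^sub>R (r + comb ?t))"
  proof -
    have "norm (r + comb ?t) \<le> N" if "density ((1/N) *\<^sub>R (r + comb ?t)) \<noteq> 0"
      using density_nonzero_imp(3)[OF that] N by (simp add: divide_le_eq_1)
    then show ?thesis using floor_coeffs_in_int_coeffs by (auto simp: ball_coeffs_def)
  qed
  finally show ?thesis using True by (simp add: step_density_def)
qed (simp add: step_density_def grid_cell_def indicator_def)

lemma step_density_has_integral:
  assumes N: "0 < N" and r: "r \<in> reps"
  shows "(step_density N r has_integral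
           (1/N) ^ card S * (\<Sum>t\<in>ball_coeffs N r. density ((1/N) *\<^sub>R (r + comb t)))) UNIV"
proof -
  have "((\<lambda>z. \<Sum>t\<in>ball_coeffs N r. density ((1/N) *\<^sub>R (r + comb t)) * indicator (grid_cell N t) z)
      has_integral (\<Sum>t\<in>ball_coeffs N r. density ((1/N) *\<^sub>R (r + comb t)) * (1/N) ^ card S)) UNIV"
    using finite_ball_coeffs[OF r] grid_cell_has_integral[OF N]
    by (intro has_integral_sum has_integral_mult_right) (auto simp: ball_coeffs_def)
  then show ?thesis
    by (simp add: step_density_eq_sum[OF N r, abs_def] sum_distrib_left mult.commute)
qed

lemma wall_sum_eq_integrals:
  assumes N: "0 < N"
  shows "wall_sum C L m N =
    N ^ ((\<Sum>i\<in>UNIV. m i) + dim W) * (\<Sum>r\<in>reps. integral UNIV (step_density N r))"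
proof -
  have "(\<Sum>t\<in>ball_coeffs N r. density ((1/N) *\<^sub>R (r + comb t))) =
      N ^ card S * integral UNIV (step_density N r)" if "r \<in> reps" for r
    using integral_unique[OF step_density_has_integral[OF N that]] N by (simp add: power_one_over)
  then show ?thesis
    using N by (simp add: wall_sum_rescaled sum_lattice_ball_eq card_S power_add sum_distrib_left
        mult.assoc)
qed

definition jump_coeffs :: "(real^'k) set" where
  "jump_coeffs = {z. comb z \<in> jump_set}"

lemma negligible_jump_coeffs: "negligible jump_coeffs"
proof -
  define P where "P = {p \<in> wall_pairs. \<sigma> p \<noteq> 0}"
  have walls: "negligible (\<Union>p\<in>P. {z. wall_form (fst p) (snd p) (comb z) = 0})"
  proof (rule negligible_Union)
    show "finite ((\<lambda>p. {z. wall_form (fst p) (snd p) (comb z) = 0}) ` P)"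
      unfolding P_def using finite_wall_pairs by simp
  next
    fix T assume "T \<in> (\<lambda>p. {z. wall_form (fst p) (snd p) (comb z) = 0}) ` P"
    then obtain p where p: "p \<in> P" "T = {z. wall_form (fst p) (snd p) (comb z) = 0}" by blast
    obtain c where c: "c \<in> C" using C_nonempty by blast
    obtain z where z: "c = comb z" using obtain_comb[OF C_in_W[OF c]] by blast
    have "sgn (wall_form (fst p) (snd p) c) = \<sigma> p" using c p C_iff unfolding P_def by auto
    then have "wall_form (fst p) (snd p) (comb z) \<noteq> 0" using p z unfolding P_def by auto
    then have "(\<lambda>z. wall_form (fst p) (snd p) (comb z)) \<noteq> (\<lambda>_. 0)" by (auto simp: fun_eq_iff)
    moreover have "linear (\<lambda>z. wall_form (fst p) (snd p) (comb z))" by (rule linearI) simp_all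
    ultimately show "negligible T" unfolding p(2) by (intro negligible_linear_level_set) auto
  qed
  have simplices: "negligible (\<Union>h. {z. dot_nat (comb z) h = 1})"
  proof (rule negligible_countable_Union)
    fix T assume "T \<in> range (\<lambda>h. {z. dot_nat (comb z) h = 1})"
    moreover have "linear (\<lambda>z. dot_nat (comb z) h)" for h by (rule linearI) simp_all
    ultimately show "negligible T" by (auto intro: negligible_linear_level_set)
  qed simp
  have "jump_coeffs \<subseteq> (\<Union>p\<in>P. {z. wall_form (fst p) (snd p) (comb z) = 0}) \<union>
      (\<Union>h. {z. dot_nat (comb z) h = 1})"
    unfolding jump_coeffs_def jump_set_def P_def by auto
  then show ?thesis using negligible_Un[OF walls simplices] negligible_subset by blast
qed

text \<open>Set to \<open>0\<close> on the null set \<open>jump_coeffs\<close>, where the step functions need not converge.\<close>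
definition limit_density :: "real^'k \<Rightarrow> real" where
  "limit_density z = (if z \<notin> jump_coeffs \<and> dummies_in_unit z then density (comb z) else 0)"

lemma step_density_tendsto:
  assumes r: "r \<in> reps" and z: "z \<notin> jump_coeffs"
  shows "((\<lambda>N. step_density N r z) \<longlongrightarrow> limit_density z) at_top"
proof -
  define zS :: "real^'k" where "zS = (\<chi> i. if i \<in> S then z$i else 0)"
  have "((\<lambda>N. (1/N) *\<^sub>R floor_coeffs N z) \<longlongrightarrow> zS) at_top"
  proof (rule vec_tendstoI)
    fix i
    show "((\<lambda>N. ((1/N) *\<^sub>R floor_coeffs N z) $ i) \<longlongrightarrow> zS $ i) at_top"
      using of_int_floor_mult_div_tendsto[of "z$i"]
      by (cases "i \<in> S") (simp_all add: floor_coeffs_def zS_def mult.commute)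
  qed
  moreover have "((\<lambda>N::real. 1/N) \<longlongrightarrow> 0) at_top"
    using tendsto_inverse_0_at_top[OF filterlim_ident] by (simp add: inverse_eq_divide)
  ultimately have "((\<lambda>N. (1/N) *\<^sub>R r + comb ((1/N) *\<^sub>R floor_coeffs N z)) \<longlongrightarrow> 0 *\<^sub>R r + comb zS) at_top"
    by (intro tendsto_intros)
  moreover have "comb zS = comb z" unfolding zS_def by (rule comb_cong) simp
  ultimately have "((\<lambda>N. (1/N) *\<^sub>R (r + comb (floor_coeffs N z))) \<longlongrightarrow> comb z) at_top"
    by (simp add: scaleR_right_distrib)
  moreover have "(1/N) *\<^sub>R (r + comb (floor_coeffs N z)) \<in> W" for N
    using reps_in_W[OF r] comb_in_W subspace_W by (simp add: subspace_add subspace_scale)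
  ultimately have "((\<lambda>N. density ((1/N) *\<^sub>R (r + comb (floor_coeffs N z)))) \<longlongrightarrow> density (comb z)) at_top"
    using z comb_in_W by (intro density_tendsto) (auto simp: jump_coeffs_def)
  then show ?thesis using z by (simp add: step_density_def limit_density_def)
qed

lemma step_density_nonneg: "0 \<le> step_density N r z"
  and step_density_le_1: "step_density N r z \<le> 1"
  unfolding step_density_def using density_nonneg density_le_1 by auto

lemma norm_comb_floor_coeffs_le:
  assumes N: "0 < N" and nz: "step_density N r z \<noteq> 0"
  shows "norm (comb (floor_coeffs N z)) \<le> N + norm r"
proof -
  have "density ((1/N) *\<^sub>R (r + comb (floor_coeffs N z))) \<noteq> 0"
    using nz by (auto simp: step_density_def split: if_splits)
  then have "norm ((1/N) *\<^sub>R (r + comb (floor_coeffs N z))) \<le> 1"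
    by (rule density_nonzero_imp(3))
  then have "norm (r + comb (floor_coeffs N z)) \<le> N" using N by (simp add: divide_le_eq_1)
  then show ?thesis using norm_triangle_ineq4[of "r + comb (floor_coeffs N z)" r] by simp
qed

text \<open>Uniform support bound: \<open>comb\<close> is bounded below on coefficient vectors, and the
  rescaled lattice points carrying mass have norm \<open>\<le> 1\<close>.\<close>
lemma obtain_step_density_support:
  obtains K where "\<And>N z. 1 \<le> N \<Longrightarrow> step_density N r z \<noteq> 0 \<Longrightarrow>
    z \<in> cbox (\<chi> i. if i \<in> S then -K else 0) (\<chi> i. if i \<in> S then K else 1)"
proof -
  obtain e where e: "e > 0" "\<And>w. (\<forall>i. i \<notin> S \<longrightarrow> w$i = 0) \<Longrightarrow> e * norm w \<le> norm (comb w)"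
    using comb_bounded_below by blast
  define K where "K = (1 + norm r) / e + 1"
  have bound: "\<bar>z$i\<bar> \<le> K" if N: "1 \<le> N" and nz: "step_density N r z \<noteq> 0" and i: "i \<in> S" for N z i
  proof -
    have "e * \<bar>of_int \<lfloor>N * z$i\<rfloor>\<bar> \<le> e * norm (floor_coeffs N z)"
      using component_le_norm_cart[of "floor_coeffs N z" i] i e(1) by (simp add: floor_coeffs_def)
    also have "\<dots> \<le> N + norm r"
      using e(2)[of "floor_coeffs N z"] norm_comb_floor_coeffs_le[OF _ nz] N
      by (simp add: floor_coeffs_def)
    also have "\<dots> \<le> N * (1 + norm r)" using N mult_right_mono[of 1 N "norm r"] by (simp add: algebra_simps)
    finally have "\<bar>of_int \<lfloor>N * z$i\<rfloor>\<bar> \<le> N * ((1 + norm r) / e)"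
      using e(1) by (simp add: field_simps)
    moreover have "\<bar>N * z$i\<bar> \<le> \<bar>of_int \<lfloor>N * z$i\<rfloor>\<bar> + 1"
      using of_int_floor_le[of "N * z$i"] real_of_int_floor_add_one_gt[of "N * z$i"] by linarith
    ultimately have "N * \<bar>z$i\<bar> \<le> N * K"
      using N by (simp add: K_def abs_mult algebra_simps)
    then show ?thesis using N by simp
  qed
  show ?thesis
  proof (rule that)
    fix N z assume N: "1 \<le> N" and nz: "step_density N r z \<noteq> 0"
    then have "dummies_in_unit z" by (auto simp: step_density_def split: if_splits)
    then show "z \<in> cbox (\<chi> i. if i \<in> S then -K else 0) (\<chi> i. if i \<in> S then K else 1)"
      unfolding mem_box_cart(2) dummies_in_unit_def
      using bound[OF N nz] by (force simp: abs_le_iff less_imp_le)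
  qed
qed

lemma integral_step_density_tendsto_seq:
  assumes r: "r \<in> reps" and Y: "filterlim Y at_top sequentially" and Y1: "\<And>k. 1 \<le> Y k"
  shows "limit_density integrable_on UNIV"
    and "(\<lambda>k. integral UNIV (step_density (Y k) r)) \<longlonglongrightarrow> integral UNIV limit_density"
proof -
  obtain K where K: "\<And>N z. 1 \<le> N \<Longrightarrow> step_density N r z \<noteq> 0 \<Longrightarrow>
      z \<in> cbox (\<chi> i. if i \<in> S then -K else 0) (\<chi> i. if i \<in> S then K else 1)"
    using obtain_step_density_support by blast
  define B :: "(real^'k) set" where "B = cbox (\<chi> i. if i \<in> S then -K else 0) (\<chi> i. if i \<in> S then K else 1)"
  define f where "f k z = (if z \<in> jump_coeffs then 0 else step_density (Y k) r z)" for k z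
  have int: "f k integrable_on UNIV" for k
  proof -
    have "0 < Y k" using Y1[of k] by linarith
    then have "step_density (Y k) r integrable_on UNIV"
      using step_density_has_integral[OF _ r] by blast
    then show ?thesis by (rule integrable_spike[OF _ negligible_jump_coeffs]) (simp add: f_def)
  qed
  have bound: "norm (f k z) \<le> indicator B z" for k z
  proof (cases "f k z = 0")
    case False
    then have "step_density (Y k) r z \<noteq> 0" "f k z = step_density (Y k) r z"
      by (auto simp: f_def split: if_splits)
    then show ?thesis
      using K[OF Y1] step_density_nonneg step_density_le_1 by (simp add: B_def)
  qed simp
  have conv: "(\<lambda>k. f k z) \<longlonglongrightarrow> limit_density z" for z
  proof (cases "z \<in> jump_coeffs")
    case False
    then show ?thesis using filterlim_compose[OF step_density_tendsto[OF r False] Y]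
      by (simp add: f_def)
  qed (simp add: f_def limit_density_def)
  have "(indicator B :: real^'k \<Rightarrow> real) integrable_on UNIV"
    unfolding B_def by (rule has_integral_integrable[OF has_integral_indicator_cbox])
  note dom = dominated_convergence[OF int this bound conv]
  show "limit_density integrable_on UNIV" by (rule dom(1))
  have "integral UNIV (f k) = integral UNIV (step_density (Y k) r)" for k
    by (rule integral_spike[OF negligible_jump_coeffs]) (simp add: f_def)
  then show "(\<lambda>k. integral UNIV (step_density (Y k) r)) \<longlonglongrightarrow> integral UNIV limit_density"
    using dom(2) by simp
qed

lemma limit_density_integrable: "limit_density integrable_on UNIV"
proof -
  have "filterlim (\<lambda>k. real (Suc k)) at_top sequentially"
    by (rule filterlim_compose[OF filterlim_real_sequentially filterlim_Suc])
  then show ?thesis by (rule integral_step_density_tendsto_seq(1)[OF zero_in_reps]) simp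
qed

lemma integral_step_density_tendsto:
  assumes r: "r \<in> reps"
  shows "((\<lambda>N. integral UNIV (step_density N r)) \<longlongrightarrow> integral UNIV limit_density) at_top"
proof (rule tendsto_at_topI_sequentially)
  fix X :: "nat \<Rightarrow> real" assume X: "filterlim X at_top sequentially"
  then obtain k0 where k0: "\<And>k. k \<ge> k0 \<Longrightarrow> 1 \<le> X k"
    unfolding filterlim_at_top eventually_sequentially by blast
  have "filterlim (\<lambda>k. X (k + k0)) at_top sequentially"
    by (rule filterlim_compose[OF X filterlim_add_const_nat_at_top])
  then have "(\<lambda>k. integral UNIV (step_density (X (k + k0)) r)) \<longlonglongrightarrow> integral UNIV limit_density"
    using integral_step_density_tendsto_seq(2)[OF r] k0 by simp
  then show "(\<lambda>k. integral UNIV (step_density (X k) r)) \<longlonglongrightarrow> integral UNIV limit_density"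
    by (rule LIMSEQ_offset)
qed

lemma wall_sum_div_tendsto:
  "((\<lambda>N. wall_sum C L m N / N ^ ((\<Sum>i\<in>UNIV. m i) + dim W)) \<longlongrightarrow>
      real (card reps) * integral UNIV limit_density) at_top"
proof -
  have "((\<lambda>N. \<Sum>r\<in>reps. integral UNIV (step_density N r)) \<longlongrightarrow>
      (\<Sum>r\<in>reps. integral UNIV limit_density)) at_top"
    by (intro tendsto_sum integral_step_density_tendsto)
  moreover have "eventually (\<lambda>N. (\<Sum>r\<in>reps. integral UNIV (step_density N r)) =
      wall_sum C L m N / N ^ ((\<Sum>i\<in>UNIV. m i) + dim W)) at_top"
    using eventually_gt_at_top[of "0::real"] by eventually_elim (simp add: wall_sum_eq_integrals)
  ultimately show ?thesis by (simp add: Lim_transform_eventually)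
qed

lemma limit_density_nonneg: "0 \<le> limit_density z"
  unfolding limit_density_def using density_nonneg by simp

lemma obtain_C_sum_half:
  obtains c where "c \<in> C" "(\<Sum>i\<in>UNIV. c$i) = 1/2"
proof -
  obtain c where c: "c \<in> C" using C_nonempty by blast
  define s where "s = (\<Sum>i\<in>UNIV. c$i)"
  have s: "0 < s" unfolding s_def using C_pos[OF c] by (intro sum_pos) auto
  have "(1 / (2 * s)) *\<^sub>R c \<in> C" using C_scale_iff[of "1 / (2 * s)" c] c s by simp
  moreover have "(\<Sum>i\<in>UNIV. ((1 / (2 * s)) *\<^sub>R c)$i) = (1 / (2 * s)) * s"
    by (simp add: s_def sum_distrib_left)
  ultimately show ?thesis using that s by simp
qed

text \<open>Near the coefficients of a point of \<open>C\<close> with coordinate sum \<open>1/2\<close>, the image stays in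
  \<open>C\<close> with coordinate sum \<open>< 1\<close> and the monomial stays bounded away from \<open>0\<close>.\<close>
lemma obtain_box_limit_density_ge:
  obtains \<delta> :: real and a b :: "real^'k"
  where "0 < \<delta>" "0 < measure lborel (cbox a b)"
    "\<And>z. z \<in> cbox a b \<Longrightarrow> z \<notin> jump_coeffs \<Longrightarrow> \<delta> \<le> limit_density z"
proof -
  obtain c where c: "c \<in> C" and sum_c: "(\<Sum>i\<in>UNIV. c$i) = 1/2" by (rule obtain_C_sum_half)
  define \<delta> where "\<delta> = monom m c / 2"
  have \<delta>: "0 < \<delta>" unfolding \<delta>_def using monom_pos[of c m] C_pos[OF c] by auto
  obtain z1 where z1: "c = comb z1" using obtain_comb[OF C_in_W[OF c]] by blast
  define z0 :: "real^'k" where "z0 = (\<chi> i. if i \<in> S then z1$i else 1/2)"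
  have comb_z0: "comb z0 = c" unfolding z1 z0_def by (rule comb_cong) simp
  define Q where "Q z \<longleftrightarrow> comb z \<in> C \<and> (\<Sum>i\<in>UNIV. comb z $ i) < 1 \<and> \<delta> < monom m (comb z) \<and>
      (\<forall>i. i \<notin> S \<longrightarrow> 0 < z$i \<and> z$i < 1)" for z
  have "eventually Q (at z0)"
  proof -
    have t: "(comb \<longlongrightarrow> c) (at z0)"
      using comb_tendsto[OF tendsto_ident_at, of z0 UNIV] comb_z0 by simp
    have "eventually (\<lambda>z. comb z \<in> C) (at z0)"
      using eventually_in_C[OF c t comb_in_W] .
    moreover have "eventually (\<lambda>z. (\<Sum>i\<in>UNIV. comb z $ i) < 1) (at z0)"
      using sum_c by (intro order_tendstoD(2)[OF tendsto_sum[OF tendsto_vec_nth[OF t]]]) simp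
    moreover have "eventually (\<lambda>z. \<delta> < monom m (comb z)) (at z0)"
      using \<delta> by (intro order_tendstoD(1)[OF monom_tendsto[OF t]]) (simp add: \<delta>_def)
    moreover have "eventually (\<lambda>z. i \<notin> S \<longrightarrow> 0 < z$i \<and> z$i < 1) (at z0)" for i
    proof (cases "i \<in> S")
      case False
      then have "((\<lambda>z. z$i) \<longlongrightarrow> 1/2) (at z0)"
        using tendsto_vec_nth[OF tendsto_ident_at[of z0 UNIV], of i] by (simp add: z0_def)
      then have "eventually (\<lambda>z. 0 < z$i) (at z0)" "eventually (\<lambda>z. z$i < 1) (at z0)"
        by (auto intro: order_tendstoD)
      then show ?thesis by eventually_elim simp
    qed simp
    then have "eventually (\<lambda>z. \<forall>i. i \<notin> S \<longrightarrow> 0 < z$i \<and> z$i < 1) (at z0)"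
      by (rule eventually_all_finite)
    ultimately show ?thesis unfolding Q_def by eventually_elim blast
  qed
  moreover have "Q z0" unfolding Q_def comb_z0 using c sum_c \<delta> by (simp add: z0_def \<delta>_def)
  ultimately obtain a b where ab: "0 < measure lborel (cbox a b)" "\<forall>z\<in>cbox a b. Q z"
    by (rule eventually_at_imp_cbox)
  have ge: "\<delta> \<le> limit_density z" if "Q z" "z \<notin> jump_coeffs" for z
    using that monom_le_density[of "comb z"]
    by (simp add: Q_def limit_density_def dummies_in_unit_def less_imp_le)
  show ?thesis
    using \<delta> ab(1) by (rule that) (use ab(2) ge in blast)
qed

lemma integral_limit_density_pos: "0 < integral UNIV limit_density"
proof -
  obtain \<delta> and a b :: "real^'k" where \<delta>: "0 < \<delta>" and ab: "0 < measure lborel (cbox a b)"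
    and ge: "\<And>z. z \<in> cbox a b \<Longrightarrow> z \<notin> jump_coeffs \<Longrightarrow> \<delta> \<le> limit_density z"
    using obtain_box_limit_density_ge by blast
  define g where "g z = (if z \<in> jump_coeffs then 0 else \<delta> * indicator (cbox a b) z)" for z
  have "((\<lambda>z. \<delta> * indicator (cbox a b) z) has_integral \<delta> * measure lborel (cbox a b)) UNIV"
    by (intro has_integral_mult_right has_integral_indicator_cbox)
  then have "(g has_integral \<delta> * measure lborel (cbox a b)) UNIV"
    by (rule has_integral_spike[OF negligible_jump_coeffs, rotated]) (simp add: g_def)
  moreover have "g z \<le> limit_density z" for z
    using ge[of z] limit_density_nonneg[of z] by (auto simp: g_def indicator_def)
  ultimately have "\<delta> * measure lborel (cbox a b) \<le> integral UNIV limit_density"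
    by (rule has_integral_le[OF _ integrable_integral[OF limit_density_integrable]])
  then show ?thesis using mult_pos_pos[OF \<delta> ab] by linarith
qed

end

theorem lemma7p1:
  fixes L W C :: "(real^'k::finite) set" and m :: "'k \<Rightarrow> nat" and r :: nat
  assumes "finite_index_sublattice L"
    and "\<forall>i. 0 < m i"
    and "is_wall W"
    and "r = CARD('k) - dim W"
    and "\<forall>i. \<not> W \<subseteq> {b. b$i = 0}"
    and "open_cell_of W C"
  shows "\<exists>c\<ge>0.
     (\<lambda>N. wall_sum C L m N - c * N ^ ((\<Sum>i\<in>UNIV. m i) + CARD('k) - r))
        \<in> o[at_top](\<lambda>N. N ^ ((\<Sum>i\<in>UNIV. m i) + CARD('k) - r)) \<and>
     (c > 0 \<longleftrightarrow> lattice_in (W \<inter> L) W)"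
proof -
  interpret index_lattice L by unfold_locales (rule assms(1))
  have W: "subspace W" using subspace_wall[OF assms(3)] .
  have span_W_L: "span (W \<inter> L) = W"
    using span_inter_L[OF W wall_subset_span_int_vecs[OF assms(3)]] .
  obtain S and \<beta> :: "'k \<Rightarrow> real^'k" where \<beta>: "\<beta> ` S \<subseteq> W \<inter> L" "inj_on \<beta> S"
    "independent (\<beta> ` S)" "span (\<beta> ` S) = span (W \<inter> L)"
    by (rule obtain_indexed_basis)
  obtain a0 where a0: "C = {b. \<forall>(I,J)\<in>wall_pairs. sgn (wall_form I J b) = sgn (wall_form I J a0)}"
    using assms(6) unfolding open_cell_of_def is_cell_def by blast
  interpret cell_count L W C m a0 S \<beta>
    using assms(2,6) W \<beta> a0 span_W_L by unfold_locales (auto simp: open_cell_of_def)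
  define c where "c = real (card reps) * integral UNIV limit_density"
  have "0 < card reps" using finite_reps zero_in_reps card_gt_0_iff by blast
  then have "0 < c" using integral_limit_density_pos by (simp add: c_def)
  moreover have "(\<Sum>i\<in>UNIV. m i) + CARD('k) - r = (\<Sum>i\<in>UNIV. m i) + dim W"
    using assms(4) dim_subset_UNIV_cart[of W] by simp
  moreover have "(\<lambda>N. wall_sum C L m N - c * N ^ ((\<Sum>i\<in>UNIV. m i) + dim W))
      \<in> o[at_top](\<lambda>N. N ^ ((\<Sum>i\<in>UNIV. m i) + dim W))"
    unfolding c_def by (rule smallo_of_tendsto_div[OF wall_sum_div_tendsto])
  ultimately show ?thesis using lattice_in_inter_L[OF W span_W_L] by (intro exI[of _ c]) auto
qed

end
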